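(* Let $R$ be a full-rank order of rank $n$ in the number field $K=\mathrm{Q}(R)$, let $p$ be a prime and let $a\in\mathbb{Z}_{>0}$ satisfy $0<\operatorname{ord}_p(a)<\operatorname{ord}_p(\delta(R))$. If the ideal $\delta(R)R^\dagger+aR\subseteq R$ is invertible at $p$, then $p\le n$.
   Context: An order is a domain whose additive group is isomorphic to $\mathbb{Z}^n$ ($n$ its rank); $\mathrm{Q}(R)$ is its field of fractions, a number field of degree $n$. For an additive subgroup $I\subseteq K$, the trace dual is $I^\dagger=\{x\in K:\operatorname{Tr}_{K/\mathbb{Q}}(xI)\subseteq\mathbb{Z}\}$. The reduced discriminant $\delta(R)$ is the exponent of the finite abelian group $R^\dagger/R$. For a rational prime $p$, $R_p$ denotes the localization of $R$ at $p$ as a $\mathbb{Z}$-algebra (i.e. $\mathbb{Z}_{(p)}\otimes R$), and a fractional ideal $I$ of $R$ is invertible at $p$ if $IR_p$ is an invertible ideal of $R_p$, i.e. $(IR_p)J=R_p$ for some $R_p$-submodule $J\subseteq K$. *)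

theory Defs
  imports "HOL-Computational_Algebra.Computational_Algebra"
begin

text \<open>Orders are modelled as subrings of an ambient field of characteristic 0
(every order embeds in its fraction field, which has characteristic 0).\<close>

definition is_order :: "'a::field_char_0 set \<Rightarrow> nat \<Rightarrow> bool" where
  "is_order R n \<longleftrightarrow>
     1 \<in> R \<and> (\<forall>x\<in>R. \<forall>y\<in>R. x + y \<in> R \<and> - x \<in> R \<and> x * y \<in> R) \<and>
     (\<exists>b :: nat \<Rightarrow> 'a.
        R = {\<Sum>i<n. of_int (c i) * b i | c. True} \<and>
        (\<forall>c. (\<Sum>i<n. of_int (c i) * b i) = 0 \<longrightarrow> (\<forall>i<n. c i = 0)))"

definition frac_field :: "'a::field set \<Rightarrow> 'a set" where
  "frac_field R = {x / y | x y. x \<in> R \<and> y \<in> R \<and> y \<noteq> 0}"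

definition is_Q_basis :: "'a::field_char_0 set \<Rightarrow> (nat \<Rightarrow> 'a) \<Rightarrow> nat \<Rightarrow> bool" where
  "is_Q_basis K b n \<longleftrightarrow> (\<forall>i<n. b i \<in> K) \<and>
     (\<forall>x\<in>K. \<exists>!c::nat \<Rightarrow> rat. (\<forall>j\<ge>n. c j = 0) \<and> x = (\<Sum>j<n. of_rat (c j) * b j))"

definition Q_coords :: "(nat \<Rightarrow> 'a::field_char_0) \<Rightarrow> nat \<Rightarrow> 'a \<Rightarrow> nat \<Rightarrow> rat" where
  "Q_coords b n x = (THE c. (\<forall>j\<ge>n. c j = 0) \<and> x = (\<Sum>j<n. of_rat (c j) * b j))"

text \<open>Tr_{K/Q}(x): trace of multiplication by x on K as Q-vector space,
  computed in a (chosen) Q-basis of K.\<close>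
definition field_trace :: "'a::field_char_0 set \<Rightarrow> 'a \<Rightarrow> rat" where
  "field_trace K x = (let (b, n) = (SOME (b, n). is_Q_basis K b n)
                      in \<Sum>i<n. Q_coords b n (x * b i) i)"

definition trace_dual :: "'a::field_char_0 set \<Rightarrow> 'a set \<Rightarrow> 'a set" where
  "trace_dual K I = {x \<in> K. \<forall>y\<in>I. field_trace K (x * y) \<in> \<int>}"

definition red_disc :: "'a::field_char_0 set \<Rightarrow> nat" where
  "red_disc R = (LEAST d::nat. d > 0 \<and>
      (\<forall>x\<in>trace_dual (frac_field R) R. of_nat d * x \<in> R))"

text \<open>R_p = Z_(p) \<otimes> R.\<close>
definition loc_at :: "nat \<Rightarrow> 'a::field_char_0 set \<Rightarrow> 'a set" where
  "loc_at p R = {r / of_nat s | r s. r \<in> R \<and> \<not> p dvd s}"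

definition ideal_mult :: "'a::field set \<Rightarrow> 'a set \<Rightarrow> 'a set" where
  "ideal_mult A B = {\<Sum>i<m. f i * g i | (m::nat) f g. \<forall>i<m. f i \<in> A \<and> g i \<in> B}"

definition invertible_at :: "'a::field_char_0 set \<Rightarrow> nat \<Rightarrow> 'a set \<Rightarrow> bool" where
  "invertible_at R p I \<longleftrightarrow>
     (\<exists>J. J \<subseteq> frac_field R \<and> 0 \<in> J \<and> (\<forall>x\<in>J. \<forall>y\<in>J. x + y \<in> J) \<and>
          (\<forall>r\<in>loc_at p R. \<forall>x\<in>J. r * x \<in> J) \<and>
          ideal_mult (ideal_mult I (loc_at p R)) J = loc_at p R)"

end

theory Submission
  imports Defs "Jordan_Normal_Form.Determinant"
begin

(*
  Write \<delta> = red_disc R and I = \<delta>R\<^sup>\<dagger> + aR, and let J be an inverse of I at p.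
  Call the elements v of R_p with Tr(v R_p) \<subseteq> pZ_(p) the trace radical. As a \<in> I, we have
  aJ \<subseteq> R_p, and since ord_p(\<delta>/a) > 0 this puts \<delta>R\<^sup>\<dagger>R_pJ into the trace radical; hence
  1 \<in> IR_pJ gives 1 = \<nu> + ag with \<nu> in the trace radical and g \<in> J.

  If p > n, the trace radical is nil modulo pR_p: some power of an element of R is
  idempotent modulo p, and the trace of an idempotent matrix modulo p is its rank, which
  lies in 1..n < p unless the matrix vanishes. So \<nu>\<^sup>T \<in> p\<^sup>kR_p, where p\<^sup>k is the exact power
  of p dividing a, and the geometric series gives 1 - \<nu>\<^sup>T = a\<psi> with \<psi> \<in> J. For x \<in> R\<^sup>\<dagger>
  this yields (\<delta>/p\<^sup>k)x \<in> R_p, and together with \<delta>x \<in> R it gives (\<delta>/p\<^sup>k)R\<^sup>\<dagger> \<subseteq> R,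
  contradicting the minimality of \<delta>.
*)

section \<open>Idempotent integer matrices modulo a prime\<close>

lemma idempotent_mod_prime_deflation:
  fixes p :: int and E :: "nat \<Rightarrow> nat \<Rightarrow> int"
  assumes "prime p" and "finite I"
    and idem: "\<And>a c. a \<in> I \<Longrightarrow> c \<in> I \<Longrightarrow> p dvd (\<Sum>k\<in>I. E a k * E k c) - E a c"
    and i: "i \<in> I" and c0: "c0 \<in> I" and unit: "\<not> p dvd E i c0"
  obtains E' where "\<And>k l. k \<in> I - {i} \<Longrightarrow> l \<in> I - {i} \<Longrightarrow>
      p dvd (\<Sum>m\<in>I - {i}. E' k m * E' m l) - E' k l"
    and "p dvd (\<Sum>k\<in>I - {i}. E' k k) - ((\<Sum>k\<in>I. E k k) - 1)"
proof -
  define v where "v k = E k c0" for k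
  have "coprime (v i) p"
    using unit assms(1) unfolding v_def by (metis coprime_commute prime_imp_coprime)
  then obtain u w where "u * v i + w * p = 1" using bezout_int by (metis coprime_iff_gcd_eq_1)
  then have "u * v i - 1 = p * (- w)" by (simp add: algebra_simps)
  then have u: "p dvd u * v i - 1" by (metis dvd_triv_left)
  define I' where "I' = I - {i}"
  \<comment> \<open>Subtract the rank-one idempotent spanned by the column v, whose trace is u v_i = 1 mod p.\<close>
  define E' where "E' k l = E k l - u * v k * E i l" for k l
  have split_dvd: "p dvd (\<Sum>m\<in>I'. f m) + f i - y" if "p dvd (\<Sum>m\<in>I. f m) - y" for f y
    using that \<open>finite I\<close> i unfolding I'_def by (simp add: sum.remove add.commute)
  have Ev: "p dvd (\<Sum>m\<in>I'. E a m * v m) + E a i * v i - v a" if "a \<in> I" for a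
    using split_dvd idem[OF that c0] unfolding v_def by blast
  have "p dvd (\<Sum>m\<in>I'. E' k m * E' m l) - E' k l" if k: "k \<in> I'" and l: "l \<in> I'" for k l
  proof -
    have kI: "k \<in> I" and lI: "l \<in> I" using k l unfolding I'_def by auto
    define A where "A = (\<Sum>m\<in>I'. E k m * E m l)"
    define B where "B = (\<Sum>m\<in>I'. E k m * v m)"
    define C where "C = (\<Sum>m\<in>I'. E i m * E m l)"
    define D where "D = (\<Sum>m\<in>I'. E i m * v m)"
    have "(\<Sum>m\<in>I'. E' k m * E' m l) = (\<Sum>m\<in>I'. E k m * E m l - u * E i l * (E k m * v m)
            - u * v k * (E i m * E m l) + u\<^sup>2 * v k * E i l * (E i m * v m))"
      unfolding E'_def by (rule sum.cong) (auto simp: algebra_simps power2_eq_square)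
    also have "\<dots> = A - u * E i l * B - u * v k * C + u\<^sup>2 * v k * E i l * D"
      unfolding A_def B_def C_def D_def by (simp add: sum.distrib sum_subtractf sum_distrib_left)
    finally have expand: "(\<Sum>m\<in>I'. E' k m * E' m l) - E' k l =
        (A + E k i * E i l - E k l) - u * E i l * (B + E k i * v i - v k)
        - u * v k * (C + E i i * E i l - E i l) + u\<^sup>2 * v k * E i l * (D + E i i * v i - v i)
        + (E k i * E i l + u * v k * E i l - u * v k * E i i * E i l) * (u * v i - 1)"
      unfolding E'_def by (simp add: algebra_simps power2_eq_square)
    have hA: "p dvd A + E k i * E i l - E k l" using split_dvd[OF idem[OF kI lI]] unfolding A_def .
    have hB: "p dvd B + E k i * v i - v k" using Ev[OF kI] unfolding B_def .
    have hC: "p dvd C + E i i * E i l - E i l" using split_dvd[OF idem[OF i lI]] unfolding C_def .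
    have hD: "p dvd D + E i i * v i - v i" using Ev[OF i] unfolding D_def .
    show ?thesis unfolding expand by (intro hA hB hC hD u dvd_add dvd_diff dvd_mult)
  qed
  moreover have "p dvd (\<Sum>k\<in>I'. E' k k) - ((\<Sum>k\<in>I. E k k) - 1)"
  proof -
    define D where "D = (\<Sum>m\<in>I'. E i m * v m)"
    have "(\<Sum>k\<in>I'. E' k k) - ((\<Sum>k\<in>I. E k k) - 1) = (E i i - 1) * (u * v i - 1) - u * (D + E i i * v i - v i)"
      unfolding E'_def D_def I'_def using \<open>finite I\<close> i
      by (simp add: sum.remove sum_subtractf sum_distrib_left algebra_simps)
    moreover have "p dvd D + E i i * v i - v i" using Ev[OF i] unfolding D_def .
    ultimately show ?thesis using u by simp
  qed
  ultimately show thesis unfolding I'_def by (rule that)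
qed

lemma idempotent_mod_prime_trace:
  fixes p :: int and E :: "nat \<Rightarrow> nat \<Rightarrow> int"
  assumes "prime p" and "finite I"
    and "\<And>a c. a \<in> I \<Longrightarrow> c \<in> I \<Longrightarrow> p dvd (\<Sum>k\<in>I. E a k * E k c) - E a c"
    and "\<exists>a\<in>I. \<exists>c\<in>I. \<not> p dvd E a c"
  shows "\<exists>r. 1 \<le> r \<and> r \<le> card I \<and> p dvd (\<Sum>i\<in>I. E i i) - int r"
  using assms(2-4)
proof (induction I arbitrary: E rule: finite_psubset_induct)
  case (psubset I)
  from psubset.prems(2) obtain i c0 where "i \<in> I" "c0 \<in> I" "\<not> p dvd E i c0" by blast
  then obtain E' where
    idem': "\<And>k l. k \<in> I - {i} \<Longrightarrow> l \<in> I - {i} \<Longrightarrow> p dvd (\<Sum>m\<in>I - {i}. E' k m * E' m l) - E' k l"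
    and trace': "p dvd (\<Sum>k\<in>I - {i}. E' k k) - ((\<Sum>k\<in>I. E k k) - 1)"
    using idempotent_mod_prime_deflation[OF assms(1) \<open>finite I\<close> psubset.prems(1)] by blast
  have smaller: "I - {i} \<subset> I" using \<open>i \<in> I\<close> by auto
  have card_I: "card I = Suc (card (I - {i}))" using \<open>i \<in> I\<close> psubset.hyps by (metis card_Suc_Diff1)
  show ?case
  proof (cases "\<exists>a\<in>I - {i}. \<exists>c\<in>I - {i}. \<not> p dvd E' a c")
    case True
    from psubset.IH[OF smaller idem' True] obtain r where
      r: "1 \<le> r" "r \<le> card (I - {i})" "p dvd (\<Sum>i\<in>I - {i}. E' i i) - int r" by blast
    have "p dvd (\<Sum>k\<in>I. E k k) - int (Suc r)"
      using dvd_diff[OF r(3) trace'] by (simp add: algebra_simps)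
    then show ?thesis using r card_I by (intro exI[of _ "Suc r"]) auto
  next
    case False
    then have "p dvd (\<Sum>k\<in>I - {i}. E' k k)" by (intro dvd_sum) auto
    then have "p dvd (\<Sum>k\<in>I. E k k) - int 1" using dvd_diff[OF _ trace'] by fastforce
    then show ?thesis using card_I by (intro exI[of _ 1]) auto
  qed
qed

section \<open>Linear algebra over the rationals\<close>

lemma injective_matrix_det_nonzero:
  fixes A :: "nat \<Rightarrow> nat \<Rightarrow> rat" and n :: nat
  assumes inj: "\<And>c. (\<forall>l<n. (\<Sum>k<n. c k * A k l) = 0) \<Longrightarrow> \<forall>k<n. c k = 0"
  shows "det (mat n n (\<lambda>(l, k). A k l)) \<noteq> 0"
proof
  define B where "B = mat n n (\<lambda>(l, k). A k l)"
  have B: "B \<in> carrier_mat n n" unfolding B_def by simp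
  assume "det (mat n n (\<lambda>(l, k). A k l)) = 0"
  then obtain v where v: "v \<in> carrier_vec n" "v \<noteq> 0\<^sub>v n" "B *\<^sub>v v = 0\<^sub>v n"
    using det_0_iff_vec_prod_zero_field[OF B] unfolding B_def by blast
  have "(\<Sum>k<n. vec_index v k * A k l) = 0" if l: "l < n" for l
  proof -
    have "vec_index (B *\<^sub>v v) l = 0" using v(3) l by simp
    then show ?thesis
      using l v(1) unfolding B_def by (simp add: scalar_prod_def lessThan_atLeast0 mult.commute)
  qed
  with inj have "v = 0\<^sub>v n" using v(1) by (intro eq_vecI) auto
  with v(2) show False by simp
qed

lemma injective_matrix_inverse:
  fixes A :: "nat \<Rightarrow> nat \<Rightarrow> rat" and n :: nat
  assumes inj: "\<And>c. (\<forall>l<n. (\<Sum>k<n. c k * A k l) = 0) \<Longrightarrow> \<forall>k<n. c k = 0"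
  obtains H where "\<And>c k. k < n \<Longrightarrow> (\<Sum>l<n. H k l * (\<Sum>k'<n. c k' * A k' l)) = c k"
    and "\<And>e l. l < n \<Longrightarrow> (\<Sum>k<n. (\<Sum>l'<n. H k l' * e l') * A k l) = e l"
proof -
  define B where "B = mat n n (\<lambda>(l, k). A k l)"
  have B: "B \<in> carrier_mat n n" unfolding B_def by simp
  have det_B: "det B \<noteq> 0" unfolding B_def by (rule injective_matrix_det_nonzero[OF inj])
  define C where "C = adj_mat B"
  have C: "C \<in> carrier_mat n n" "B * C = det B \<cdot>\<^sub>m 1\<^sub>m n" "C * B = det B \<cdot>\<^sub>m 1\<^sub>m n"
    using adj_mat[OF B] unfolding C_def by auto
  have CB: "(\<Sum>l<n. C $$ (k, l) * A k' l) = (if k = k' then det B else 0)"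
    if "k < n" "k' < n" for k k'
  proof -
    have "(C * B) $$ (k, k') = (if k = k' then det B else 0)" using C(3) that by simp
    then show ?thesis using that C(1) unfolding B_def by (simp add: scalar_prod_def lessThan_atLeast0)
  qed
  have BC: "(\<Sum>k<n. A k l * C $$ (k, l')) = (if l = l' then det B else 0)"
    if "l < n" "l' < n" for l l'
  proof -
    have "(B * C) $$ (l, l') = (if l = l' then det B else 0)" using C(1,2) that by simp
    then show ?thesis using that C(1) unfolding B_def by (simp add: scalar_prod_def lessThan_atLeast0)
  qed
  define H where "H k l = C $$ (k, l) / det B" for k l
  show thesis
  proof
    fix c k assume k: "k < n"
    have "(\<Sum>l<n. H k l * (\<Sum>k'<n. c k' * A k' l))
        = (\<Sum>l<n. \<Sum>k'<n. c k' * (C $$ (k, l) * A k' l) / det B)"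
      unfolding H_def by (simp add: sum_distrib_left algebra_simps)
    also have "\<dots> = (\<Sum>k'<n. c k' * (\<Sum>l<n. C $$ (k, l) * A k' l) / det B)"
      by (subst sum.swap) (simp add: sum_distrib_left sum_divide_distrib)
    also have "\<dots> = (\<Sum>k'<n. if k = k' then c k' else 0)"
      by (rule sum.cong) (use k det_B CB in auto)
    finally show "(\<Sum>l<n. H k l * (\<Sum>k'<n. c k' * A k' l)) = c k" using k by simp
  next
    fix e l assume l: "l < n"
    have "(\<Sum>k<n. (\<Sum>l'<n. H k l' * e l') * A k l)
        = (\<Sum>k<n. \<Sum>l'<n. e l' * (A k l * C $$ (k, l')) / det B)"
      unfolding H_def by (simp add: sum_distrib_right sum_distrib_left algebra_simps)
    also have "\<dots> = (\<Sum>l'<n. e l' * (\<Sum>k<n. A k l * C $$ (k, l')) / det B)"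
      by (subst sum.swap) (simp add: sum_distrib_left sum_divide_distrib)
    also have "\<dots> = (\<Sum>l'<n. if l = l' then e l' else 0)"
      by (rule sum.cong) (use l det_B BC in auto)
    finally show "(\<Sum>k<n. (\<Sum>l'<n. H k l' * e l') * A k l) = e l" using l by simp
  qed
qed

lemma rat_common_denominator:
  fixes A :: "rat set"
  assumes "finite A"
  obtains d :: int where "d > 0" and "\<And>q. q \<in> A \<Longrightarrow> of_int d * q \<in> \<int>"
proof
  define den where "den q = snd (quotient_of q)" for q
  have den: "den q > 0" "of_int (den q) * q \<in> \<int>" for q
  proof -
    obtain z e where ze: "quotient_of q = (z, e)" by (cases "quotient_of q")
    show "den q > 0" unfolding den_def using quotient_of_denom_pos' .
    have "of_int (den q) * q = of_int z"
      using quotient_of_div[OF ze] quotient_of_denom_pos[OF ze] unfolding den_def ze by simp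
    then show "of_int (den q) * q \<in> \<int>" by simp
  qed
  show "(\<Prod>q\<in>A. den q) > 0" using den(1) by (simp add: prod_pos)
  fix q assume q: "q \<in> A"
  have "(\<Prod>q\<in>A. den q) = den q * (\<Prod>q'\<in>A - {q}. den q')"
    using assms q by (simp add: prod.remove)
  then have "of_int (\<Prod>q\<in>A. den q) * q = of_int (\<Prod>q'\<in>A - {q}. den q') * (of_int (den q) * q)"
    by (simp only: of_int_mult mult_ac)
  then show "of_int (\<Prod>q\<in>A. den q) * q \<in> \<int>" by (metis Ints_mult Ints_of_int den(2))
qed

lemma Q_coords_expansion:
  assumes "is_Q_basis K c m" "x \<in> K"
  shows "(\<forall>j\<ge>m. Q_coords c m x j = 0) \<and> x = (\<Sum>j<m. of_rat (Q_coords c m x j) * c j)"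
proof -
  from assms have "\<exists>!q::nat\<Rightarrow>rat. (\<forall>j\<ge>m. q j = 0) \<and> x = (\<Sum>j<m. of_rat (q j) * c j)"
    unfolding is_Q_basis_def by blast
  then show ?thesis unfolding Q_coords_def by (rule theI')
qed

lemma Q_coords_eqI:
  assumes "is_Q_basis K c m" "x \<in> K" "x = (\<Sum>j<m. of_rat (q j) * c j)" "j < m"
  shows "Q_coords c m x j = q j"
proof -
  define q' where "q' j = (if j < m then q j else 0)" for j
  have unique: "\<exists>!q::nat\<Rightarrow>rat. (\<forall>j\<ge>m. q j = 0) \<and> x = (\<Sum>j<m. of_rat (q j) * c j)"
    using assms(1,2) unfolding is_Q_basis_def by blast
  have "Q_coords c m x = q'"
    unfolding Q_coords_def by (rule the1_equality[OF unique]) (use assms(3) in \<open>simp add: q'_def\<close>)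
  then show ?thesis using assms(4) unfolding q'_def by simp
qed

lemma Q_coords_sum:
  assumes B: "is_Q_basis K c m" and "finite A" and y: "\<And>i. i \<in> A \<Longrightarrow> y i \<in> K"
    and s: "(\<Sum>i\<in>A. of_rat (r i) * y i) \<in> K" and j: "j < m"
  shows "Q_coords c m (\<Sum>i\<in>A. of_rat (r i) * y i) j = (\<Sum>i\<in>A. r i * Q_coords c m (y i) j)"
proof (rule Q_coords_eqI[OF B s _ j])
  have "(\<Sum>i\<in>A. of_rat (r i) * y i) = (\<Sum>i\<in>A. of_rat (r i) * (\<Sum>j<m. of_rat (Q_coords c m (y i) j) * c j))"
    using Q_coords_expansion[OF B y] by (intro sum.cong) auto
  also have "\<dots> = (\<Sum>j<m. of_rat (\<Sum>i\<in>A. r i * Q_coords c m (y i) j) * c j)"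
    by (simp add: sum_distrib_left sum_distrib_right of_rat_sum of_rat_mult mult.assoc sum.swap[of _ A])
  finally show "(\<Sum>i\<in>A. of_rat (r i) * y i) = (\<Sum>j<m. of_rat (\<Sum>i\<in>A. r i * Q_coords c m (y i) j) * c j)" .
qed

lemma Q_coords_basis_vector:
  assumes "is_Q_basis K c m" "k < m" "l < m"
  shows "Q_coords c m (c k) l = (if k = l then 1 else 0)"
proof (rule Q_coords_eqI[OF assms(1) _ _ assms(3)])
  show "c k \<in> K" using assms(1,2) unfolding is_Q_basis_def by blast
  have "(\<Sum>j<m. of_rat (if k = j then 1 else 0) * c j) = (\<Sum>j<m. if k = j then c j else 0)"
    by (rule sum.cong) auto
  then show "c k = (\<Sum>j<m. of_rat (if k = j then 1 else 0) * c j)" using assms(2) by simp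
qed

lemma Q_coords_base_change_inverse:
  assumes B1: "is_Q_basis K c m" and B2: "is_Q_basis K c' m'" and l: "l < m" and k: "k < m"
  shows "(\<Sum>i<m'. Q_coords c' m' (c l) i * Q_coords c m (c' i) k) = (if l = k then 1 else 0)"
proof -
  have c'K: "c' i \<in> K" if "i < m'" for i using B2 that unfolding is_Q_basis_def by blast
  have cK: "c l \<in> K" using B1 l unfolding is_Q_basis_def by blast
  have "c l = (\<Sum>i<m'. of_rat (Q_coords c' m' (c l) i) * c' i)"
    using Q_coords_expansion[OF B2 cK] by blast
  then have "Q_coords c m (c l) k = (\<Sum>i<m'. Q_coords c' m' (c l) i * Q_coords c m (c' i) k)"
    using Q_coords_sum[OF B1 _ _ _ k, of "{..<m'}" c' "\<lambda>i. Q_coords c' m' (c l) i"] c'K cK by auto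
  then show ?thesis using Q_coords_basis_vector[OF B1 l k] by simp
qed

text \<open>With base-change matrices A, B satisfying BA = 1, this is tr (A M B) = tr (M B A).\<close>
lemma trace_coords_basis_independent:
  fixes K :: "'a::field_char_0 set"
  assumes B1: "is_Q_basis K c m" and B2: "is_Q_basis K c' m'"
    and x: "x \<in> K" and mult: "\<And>u v. u \<in> K \<Longrightarrow> v \<in> K \<Longrightarrow> u * v \<in> K"
  shows "(\<Sum>i<m'. Q_coords c' m' (x * c' i) i) = (\<Sum>k<m. Q_coords c m (x * c k) k)"
proof -
  have cK: "c k \<in> K" if "k < m" for k using B1 that unfolding is_Q_basis_def by blast
  have c'K: "c' i \<in> K" if "i < m'" for i using B2 that unfolding is_Q_basis_def by blast
  define A where "A i k = Q_coords c m (c' i) k" for i k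
  define B where "B k i = Q_coords c' m' (c k) i" for k i
  define M where "M k l = Q_coords c m (x * c k) l" for k l
  have trace_entry: "Q_coords c' m' (x * c' i) i = (\<Sum>k<m. A i k * (\<Sum>l<m. M k l * B l i))"
    if i: "i < m'" for i
  proof -
    have "c' i = (\<Sum>k<m. of_rat (A i k) * c k)"
      using Q_coords_expansion[OF B1 c'K[OF i]] unfolding A_def by blast
    then have "x * c' i = (\<Sum>k<m. of_rat (A i k) * (x * c k))"
      by (simp add: sum_distrib_left algebra_simps)
    then have "Q_coords c' m' (x * c' i) i = (\<Sum>k<m. A i k * Q_coords c' m' (x * c k) i)"
      using Q_coords_sum[OF B2 _ _ _ i, of "{..<m}" "\<lambda>k. x * c k" "A i"]
        mult[OF x] cK mult[OF x c'K[OF i]] by auto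
    also have "\<dots> = (\<Sum>k<m. A i k * (\<Sum>l<m. M k l * B l i))"
    proof (rule sum.cong[OF refl])
      fix k assume "k \<in> {..<m}"
      then have xcK: "x * c k \<in> K" using mult[OF x cK] by simp
      then have exp: "x * c k = (\<Sum>l<m. of_rat (M k l) * c l)"
        using Q_coords_expansion[OF B1] unfolding M_def by blast
      with xcK have "(\<Sum>l<m. of_rat (M k l) * c l) \<in> K" by simp
      then have "Q_coords c' m' (\<Sum>l<m. of_rat (M k l) * c l) i = (\<Sum>l<m. M k l * Q_coords c' m' (c l) i)"
        using Q_coords_sum[OF B2 finite_lessThan _ _ i] cK by auto
      with exp have "Q_coords c' m' (x * c k) i = (\<Sum>l<m. M k l * Q_coords c' m' (c l) i)" by simp
      then show "A i k * Q_coords c' m' (x * c k) i = A i k * (\<Sum>l<m. M k l * B l i)"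
        unfolding B_def by simp
    qed
    finally show ?thesis .
  qed
  have "(\<Sum>i<m'. Q_coords c' m' (x * c' i) i) = (\<Sum>i<m'. \<Sum>k<m. \<Sum>l<m. M k l * (B l i * A i k))"
    using trace_entry by (simp add: sum_distrib_left algebra_simps)
  also have "\<dots> = (\<Sum>k<m. \<Sum>l<m. M k l * (\<Sum>i<m'. B l i * A i k))"
    by (subst sum.swap) (simp add: sum_distrib_left sum.swap[of _ "{..<m'}"])
  also have "\<dots> = (\<Sum>k<m. \<Sum>l<m. M k l * (if l = k then 1 else 0))"
    using Q_coords_base_change_inverse[OF B1 B2] unfolding A_def B_def by (intro sum.cong) auto
  also have "\<dots> = (\<Sum>k<m. M k k)" by (simp add: if_distrib cong: if_cong)
  finally show ?thesis unfolding M_def .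
qed

lemma mem_ideal_mult: "f \<in> A \<Longrightarrow> g \<in> B \<Longrightarrow> f * g \<in> ideal_mult A B"
  unfolding ideal_mult_def by (intro CollectI exI[of _ 1] exI[of _ "\<lambda>_. f"] exI[of _ "\<lambda>_. g"]) simp

lemma ideal_mult_subset:
  assumes "0 \<in> P" and "\<And>x y. x \<in> P \<Longrightarrow> y \<in> P \<Longrightarrow> x + y \<in> P"
    and "\<And>f g. f \<in> A \<Longrightarrow> g \<in> B \<Longrightarrow> f * g \<in> P"
  shows "ideal_mult A B \<subseteq> P"
proof
  fix x assume "x \<in> ideal_mult A B"
  then obtain m f g where x: "x = (\<Sum>i<(m::nat). f i * g i)" and fg: "\<forall>i<m. f i \<in> A \<and> g i \<in> B"
    unfolding ideal_mult_def by blast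
  have "(\<Sum>i<k. f i * g i) \<in> P" if "k \<le> m" for k
    using that by (induction k) (use assms fg in auto)
  then show "x \<in> P" unfolding x by simp
qed

lemma ideal_mult_mult_subset:
  assumes "0 \<in> P" and P_add: "\<And>x y. x \<in> P \<Longrightarrow> y \<in> P \<Longrightarrow> x + y \<in> P"
    and generators: "\<And>f s g. f \<in> A \<Longrightarrow> s \<in> B \<Longrightarrow> g \<in> C \<Longrightarrow> f * s * g \<in> P"
  shows "ideal_mult (ideal_mult A B) C \<subseteq> P"
proof (rule ideal_mult_subset[OF assms(1) P_add])
  fix F G assume F: "F \<in> ideal_mult A B" and G: "G \<in> C"
  have "ideal_mult A B \<subseteq> {F. F * G \<in> P}"
    by (rule ideal_mult_subset) (use assms(1) P_add generators G in \<open>auto simp: distrib_right\<close>)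
  with F show "F * G \<in> P" by blast
qed

section \<open>Orders with an integral basis\<close>

locale order_with_basis =
  fixes R :: "'a::field_char_0 set" and n :: nat and b :: "nat \<Rightarrow> 'a"
  assumes one_in_R: "1 \<in> R"
    and ring_closed: "\<forall>x\<in>R. \<forall>y\<in>R. x + y \<in> R \<and> - x \<in> R \<and> x * y \<in> R"
    and R_eq: "R = {\<Sum>i<n. of_int (c i) * b i | c. True}"
    and basis_independent: "\<forall>c. (\<Sum>i<n. of_int (c i) * b i) = 0 \<longrightarrow> (\<forall>i<n. c i = 0)"

lemma is_order_obtain_basis:
  assumes "is_order R n"
  obtains b where "order_with_basis R n b"
  using assms unfolding is_order_def order_with_basis_def by blast

context order_with_basis
begin

lemma R_add: "x \<in> R \<Longrightarrow> y \<in> R \<Longrightarrow> x + y \<in> R"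
  and R_uminus: "x \<in> R \<Longrightarrow> - x \<in> R"
  and R_mult: "x \<in> R \<Longrightarrow> y \<in> R \<Longrightarrow> x * y \<in> R"
  using ring_closed by blast+

lemma R_diff: "x \<in> R \<Longrightarrow> y \<in> R \<Longrightarrow> x - y \<in> R"
  using R_add[OF _ R_uminus] by (metis diff_conv_add_uminus)

lemma R_combination: "(\<Sum>i<n. of_int (z i) * b i) \<in> R"
  by (subst R_eq) blast

lemma R_obtain_coeffs:
  assumes "x \<in> R"
  obtains z where "x = (\<Sum>i<n. of_int (z i) * b i)"
  using assms R_eq by blast

lemma R_zero: "0 \<in> R"
  using R_combination[of "\<lambda>_. 0"] by simp

lemma R_of_int_mult:
  assumes "x \<in> R"
  shows "of_int z * x \<in> R"
proof -
  obtain c where "x = (\<Sum>i<n. of_int (c i) * b i)" using R_obtain_coeffs[OF assms] .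
  then have "of_int z * x = (\<Sum>i<n. of_int (z * c i) * b i)"
    by (simp add: sum_distrib_left mult.assoc)
  then show ?thesis using R_combination by (simp only:)
qed

lemma R_of_nat_mult: "x \<in> R \<Longrightarrow> of_nat k * x \<in> R"
  using R_of_int_mult[of x "int k"] by simp

lemma R_of_int: "of_int z \<in> R"
  using R_of_int_mult[OF one_in_R] by simp

lemma R_power: "x \<in> R \<Longrightarrow> x ^ k \<in> R"
  by (induction k) (auto intro: one_in_R R_mult)

lemma basis_in_R:
  assumes "i < n"
  shows "b i \<in> R"
proof -
  have "(\<Sum>j<n. of_int (if j = i then 1 else 0) * b j) = (\<Sum>j<n. if j = i then b j else 0)"
    by (rule sum.cong) auto
  then show ?thesis using R_combination[of "\<lambda>j. if j = i then 1 else 0"] assms by simp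
qed

lemma rank_pos: "n > 0"
proof (rule ccontr)
  assume "\<not> n > 0"
  then have "R = {0}" by (subst R_eq) auto
  then show False using one_in_R by simp
qed

definition QR :: "'a set" where
  "QR = {x. \<exists>d::int. d \<noteq> 0 \<and> of_int d * x \<in> R}"

lemma R_subset_QR: "x \<in> R \<Longrightarrow> x \<in> QR"
  unfolding QR_def by (intro CollectI exI[of _ 1]) auto

lemma QR_add:
  assumes "x \<in> QR" "y \<in> QR"
  shows "x + y \<in> QR"
proof -
  from assms obtain d e where d: "d \<noteq> 0" "of_int d * x \<in> R" and e: "e \<noteq> 0" "of_int e * y \<in> R"
    unfolding QR_def by blast
  have "of_int (d * e) * (x + y) = of_int e * (of_int d * x) + of_int d * (of_int e * y)"
    by (simp add: algebra_simps)
  also have "\<dots> \<in> R" by (intro R_add R_of_int_mult d(2) e(2))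
  finally show ?thesis unfolding QR_def using d e by (intro CollectI exI[of _ "d * e"]) simp
qed

lemma QR_mult:
  assumes "x \<in> QR" "y \<in> QR"
  shows "x * y \<in> QR"
proof -
  from assms obtain d e where d: "d \<noteq> 0" "of_int d * x \<in> R" and e: "e \<noteq> 0" "of_int e * y \<in> R"
    unfolding QR_def by blast
  have "of_int (d * e) * (x * y) = (of_int d * x) * (of_int e * y)"
    by (simp add: algebra_simps)
  also have "\<dots> \<in> R" by (rule R_mult[OF d(2) e(2)])
  finally show ?thesis unfolding QR_def using d e by (intro CollectI exI[of _ "d * e"]) simp
qed

lemma QR_of_rat_mult:
  assumes "x \<in> QR"
  shows "of_rat r * x \<in> QR"
proof -
  from assms obtain d where d: "d \<noteq> 0" "of_int d * x \<in> R" unfolding QR_def by blast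
  obtain z e where ze: "quotient_of r = (z, e)" by (cases "quotient_of r")
  have e: "e > 0" and r: "r = of_int z / of_int e"
    using quotient_of_denom_pos[OF ze] quotient_of_div[OF ze] by auto
  have "of_int (e * d) * (of_rat r * x) = of_int z * (of_int d * x)"
    using e unfolding r by (simp add: of_rat_divide field_simps)
  also have "\<dots> \<in> R" by (rule R_of_int_mult[OF d(2)])
  finally show ?thesis unfolding QR_def using d e by (intro CollectI exI[of _ "e * d"]) simp
qed

lemma QR_sum: "finite A \<Longrightarrow> (\<And>i. i \<in> A \<Longrightarrow> f i \<in> QR) \<Longrightarrow> sum f A \<in> QR"
  by (induction A rule: finite_induct) (auto intro: R_subset_QR R_zero QR_add)

lemma basis_in_QR: "i < n \<Longrightarrow> b i \<in> QR"
  using basis_in_R R_subset_QR by blast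

lemma rat_combination_in_QR: "(\<Sum>i<n. of_rat (q i) * b i) \<in> QR"
  by (intro QR_sum QR_of_rat_mult basis_in_QR) auto

lemma QR_obtain_rat_coeffs:
  assumes "x \<in> QR"
  obtains q where "x = (\<Sum>i<n. of_rat (q i) * b i)"
proof -
  from assms obtain d where d: "d \<noteq> 0" "of_int d * x \<in> R" unfolding QR_def by blast
  then obtain z where z: "of_int d * x = (\<Sum>i<n. of_int (z i) * b i)" using R_obtain_coeffs by blast
  have "x = (\<Sum>i<n. of_int (z i) * b i) / of_int d" using z d(1) by (simp add: field_simps)
  also have "\<dots> = (\<Sum>i<n. of_rat (of_int (z i) / of_int d) * b i)"
    by (simp add: sum_divide_distrib of_rat_divide)
  finally show ?thesis by (rule that)
qed

lemma rat_combination_eq_0D: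
  assumes "(\<Sum>i<n. of_rat (q i) * b i) = 0"
  shows "\<forall>i<n. q i = 0"
proof -
  have "finite (q ` {..<n})" by simp
  then obtain d where "d > 0" and d: "\<And>r. r \<in> q ` {..<n} \<Longrightarrow> of_int d * r \<in> \<int>"
    using rat_common_denominator by blast
  then have "\<forall>i<n. \<exists>z. of_int d * q i = of_int z" by (auto elim: Ints_cases)
  then obtain z where z: "\<And>i. i < n \<Longrightarrow> of_int d * q i = of_int (z i)" by metis
  have "(\<Sum>i<n. of_int (z i) * b i) = of_int d * (\<Sum>i<n. of_rat (q i) * b i)"
    unfolding sum_distrib_left
  proof (rule sum.cong[OF refl])
    fix i assume "i \<in> {..<n}"
    then have "(of_int (z i) :: 'a) = of_rat (of_int d * q i)" using z by simp
    then show "of_int (z i) * b i = of_int d * (of_rat (q i) * b i)" by (simp add: of_rat_mult)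
  qed
  then have "\<forall>i<n. z i = 0" using assms basis_independent by auto
  then show ?thesis using z \<open>d > 0\<close> by simp
qed

lemma is_Q_basis_QR: "is_Q_basis QR b n"
  unfolding is_Q_basis_def
proof (intro conjI ballI allI impI)
  fix x assume "x \<in> QR"
  then obtain q where q: "x = (\<Sum>i<n. of_rat (q i) * b i)" by (rule QR_obtain_rat_coeffs)
  define q' where "q' j = (if j < n then q j else 0)" for j
  have q': "(\<forall>j\<ge>n. q' j = 0) \<and> x = (\<Sum>j<n. of_rat (q' j) * b j)" unfolding q'_def q by simp
  show "\<exists>!c::nat\<Rightarrow>rat. (\<forall>j\<ge>n. c j = 0) \<and> x = (\<Sum>j<n. of_rat (c j) * b j)"
  proof (rule ex1I[of _ q'])
    fix c assume c: "(\<forall>j\<ge>n. c j = 0) \<and> x = (\<Sum>j<n. of_rat (c j) * b j)"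
    have "(\<Sum>j<n. of_rat (c j - q' j) * b j) = 0"
      using c q' by (simp add: of_rat_diff algebra_simps sum_subtractf)
    then have "\<forall>j<n. c j - q' j = 0" by (rule rat_combination_eq_0D)
    then show "c = q'" using c q' by (intro ext) (metis eq_iff_diff_eq_0 not_le)
  qed (rule q')
qed (rule basis_in_QR)

abbreviation coord :: "'a \<Rightarrow> nat \<Rightarrow> rat" where
  "coord \<equiv> Q_coords b n"

lemma coord_expansion: "x \<in> QR \<Longrightarrow> x = (\<Sum>l<n. of_rat (coord x l) * b l)"
  using Q_coords_expansion[OF is_Q_basis_QR] by (rule conjunct2)

lemma coord_eqI:
  assumes "x = (\<Sum>j<n. of_rat (q j) * b j)" "j < n"
  shows "coord x j = q j"
proof (rule Q_coords_eqI[OF is_Q_basis_QR _ assms])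
  show "x \<in> QR" unfolding assms(1) by (rule rat_combination_in_QR)
qed

lemma coord_add:
  assumes "x \<in> QR" "y \<in> QR" "j < n"
  shows "coord (x + y) j = coord x j + coord y j"
proof (rule coord_eqI[OF _ assms(3)])
  have "(\<Sum>l<n. of_rat (coord x l + coord y l) * b l)
      = (\<Sum>l<n. of_rat (coord x l) * b l) + (\<Sum>l<n. of_rat (coord y l) * b l)"
    by (simp add: of_rat_add distrib_right sum.distrib)
  then show "x + y = (\<Sum>l<n. of_rat (coord x l + coord y l) * b l)"
    using coord_expansion assms(1,2) by simp
qed

lemma coord_of_rat_mult:
  assumes "x \<in> QR" "j < n"
  shows "coord (of_rat r * x) j = r * coord x j"
proof (rule coord_eqI[OF _ assms(2)])
  have "(\<Sum>l<n. of_rat (r * coord x l) * b l) = of_rat r * (\<Sum>l<n. of_rat (coord x l) * b l)"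
    by (simp add: of_rat_mult sum_distrib_left mult.assoc)
  then show "of_rat r * x = (\<Sum>l<n. of_rat (r * coord x l) * b l)"
    using coord_expansion assms(1) by simp
qed

lemma coord_diff:
  assumes "x \<in> QR" "y \<in> QR" "j < n"
  shows "coord (x - y) j = coord x j - coord y j"
  using coord_add[OF assms(1) QR_of_rat_mult[OF assms(2), of "-1"] assms(3)]
    coord_of_rat_mult[OF assms(2,3), of "-1"] by simp

lemma coord_basis: "k < n \<Longrightarrow> l < n \<Longrightarrow> coord (b k) l = (if k = l then 1 else 0)"
  by (rule Q_coords_basis_vector[OF is_Q_basis_QR])

lemma coord_in_Ints:
  assumes "x \<in> R" "j < n"
  shows "coord x j \<in> \<int>"
proof -
  obtain z where "x = (\<Sum>i<n. of_int (z i) * b i)" using R_obtain_coeffs[OF assms(1)] .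
  then have "x = (\<Sum>i<n. of_rat (of_int (z i)) * b i)" by simp
  then have "coord x j = of_int (z j)" by (rule coord_eqI[OF _ assms(2)])
  then show ?thesis by simp
qed

lemma in_R_if_coords_in_Ints:
  assumes "x \<in> QR" "\<And>j. j < n \<Longrightarrow> coord x j \<in> \<int>"
  shows "x \<in> R"
proof -
  have "\<forall>j<n. \<exists>z. coord x j = of_int z" using assms(2) by (auto elim: Ints_cases)
  then obtain z where z: "\<And>j. j < n \<Longrightarrow> coord x j = of_int (z j)" by metis
  have "x = (\<Sum>l<n. of_rat (coord x l) * b l)" by (rule coord_expansion[OF assms(1)])
  also have "\<dots> = (\<Sum>l<n. of_int (z l) * b l)" using z by (intro sum.cong) auto
  finally show ?thesis using R_combination by (simp only:)
qed

lemma mult_rat_combination: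
  assumes "y \<in> QR"
  shows "y * (\<Sum>k<n. of_rat (c k) * b k) = (\<Sum>l<n. of_rat (\<Sum>k<n. c k * coord (y * b k) l) * b l)"
proof -
  have "y * (\<Sum>k<n. of_rat (c k) * b k) = (\<Sum>k<n. of_rat (c k) * (y * b k))"
    by (simp add: sum_distrib_left algebra_simps)
  also have "\<dots> = (\<Sum>k<n. of_rat (c k) * (\<Sum>l<n. of_rat (coord (y * b k) l) * b l))"
    using coord_expansion[OF QR_mult[OF assms basis_in_QR]] by (intro sum.cong) auto
  also have "\<dots> = (\<Sum>l<n. \<Sum>k<n. of_rat (c k * coord (y * b k) l) * b l)"
    by (subst sum.swap) (simp add: sum_distrib_left of_rat_mult mult.assoc)
  also have "\<dots> = (\<Sum>l<n. of_rat (\<Sum>k<n. c k * coord (y * b k) l) * b l)"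
    by (simp add: of_rat_sum sum_distrib_right)
  finally show ?thesis .
qed

lemma QR_inverse:
  assumes y: "y \<in> QR"
  shows "inverse y \<in> QR"
proof (cases "y = 0")
  case False
  define A where "A k l = coord (y * b k) l" for k l
  have inj: "\<forall>k<n. c k = 0" if "\<forall>l<n. (\<Sum>k<n. c k * A k l) = 0" for c
  proof -
    have "y * (\<Sum>k<n. of_rat (c k) * b k) = 0"
      unfolding mult_rat_combination[OF y] A_def[symmetric] using that by simp
    then show ?thesis using False rat_combination_eq_0D by simp
  qed
  obtain H where "\<And>c k. k < n \<Longrightarrow> (\<Sum>l<n. H k l * (\<Sum>k'<n. c k' * A k' l)) = c k"
    and H: "\<And>e l. l < n \<Longrightarrow> (\<Sum>k<n. (\<Sum>l'<n. H k l' * e l') * A k l) = e l"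
    using injective_matrix_inverse[where A = A, OF inj] by blast
  define c where "c k = (\<Sum>l'<n. H k l' * coord 1 l')" for k
  have "y * (\<Sum>k<n. of_rat (c k) * b k) = (\<Sum>l<n. of_rat (coord 1 l) * b l)"
    unfolding mult_rat_combination[OF y] A_def[symmetric] c_def using H by (intro sum.cong) auto
  also have "\<dots> = 1" by (rule coord_expansion[OF R_subset_QR[OF one_in_R], symmetric])
  finally have "inverse y = (\<Sum>k<n. of_rat (c k) * b k)" using False by (simp add: field_simps)
  then show ?thesis using rat_combination_in_QR by simp
qed (simp add: R_zero R_subset_QR)

lemma frac_field_eq_QR: "frac_field R = QR"
proof
  show "frac_field R \<subseteq> QR"
  proof
    fix z assume "z \<in> frac_field R"
    then obtain x y where "z = x * inverse y" "x \<in> R" "y \<in> R"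
      unfolding frac_field_def divide_inverse by blast
    then show "z \<in> QR" by (simp add: QR_mult QR_inverse R_subset_QR)
  qed
next
  show "QR \<subseteq> frac_field R"
  proof
    fix x assume "x \<in> QR"
    then obtain d where d: "d \<noteq> 0" "of_int d * x \<in> R" unfolding QR_def by blast
    have "x = (of_int d * x) / of_int d" using d(1) by simp
    with d show "x \<in> frac_field R" unfolding frac_field_def using R_of_int by blast
  qed
qed

subsection \<open>Trace, dual and reduced discriminant\<close>

abbreviation Tr :: "'a \<Rightarrow> rat" where
  "Tr \<equiv> field_trace (frac_field R)"

lemma trace_eq_coords:
  assumes "x \<in> QR"
  shows "Tr x = (\<Sum>k<n. coord (x * b k) k)"
proof -
  define cm where "cm = (SOME (c, m). is_Q_basis QR c m)"
  obtain c m where cm_eq: "cm = (c, m)" by (cases cm)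
  have "\<exists>cm. case cm of (c, m) \<Rightarrow> is_Q_basis QR c m" using is_Q_basis_QR by auto
  then have "case cm of (c, m) \<Rightarrow> is_Q_basis QR c m" unfolding cm_def by (rule someI_ex)
  then have basis: "is_Q_basis QR c m" using cm_eq by simp
  have "Tr x = (\<Sum>i<m. Q_coords c m (x * c i) i)"
    unfolding field_trace_def frac_field_eq_QR cm_def[symmetric] cm_eq by simp
  also have "\<dots> = (\<Sum>k<n. coord (x * b k) k)"
    by (rule trace_coords_basis_independent[OF is_Q_basis_QR basis assms QR_mult])
  finally show ?thesis .
qed

lemma trace_add:
  assumes "x \<in> QR" "y \<in> QR"
  shows "Tr (x + y) = Tr x + Tr y"
proof -
  have "Tr (x + y) = (\<Sum>k<n. coord (x * b k + y * b k) k)"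
    using trace_eq_coords[OF QR_add[OF assms]] by (simp add: distrib_right)
  also have "\<dots> = (\<Sum>k<n. coord (x * b k) k + coord (y * b k) k)"
    using coord_add QR_mult[OF _ basis_in_QR] assms by (intro sum.cong) auto
  also have "\<dots> = Tr x + Tr y"
    by (simp only: sum.distrib trace_eq_coords[OF assms(1)] trace_eq_coords[OF assms(2)])
  finally show ?thesis .
qed

lemma trace_of_rat_mult:
  assumes "x \<in> QR"
  shows "Tr (of_rat r * x) = r * Tr x"
proof -
  have "Tr (of_rat r * x) = (\<Sum>k<n. coord (of_rat r * (x * b k)) k)"
    using trace_eq_coords[OF QR_of_rat_mult[OF assms]] by (simp add: mult.assoc)
  also have "\<dots> = (\<Sum>k<n. r * coord (x * b k) k)"
    using coord_of_rat_mult QR_mult[OF assms basis_in_QR] by (intro sum.cong) auto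
  also have "\<dots> = r * Tr x" by (simp only: sum_distrib_left trace_eq_coords[OF assms])
  finally show ?thesis .
qed

lemma trace_one: "Tr 1 = of_nat n"
proof -
  have "Tr 1 = (\<Sum>k<n. coord (b k) k)"
    using trace_eq_coords[OF R_subset_QR[OF one_in_R]] by (simp only: mult_1)
  also have "\<dots> = (\<Sum>k<n. 1)" by (intro sum.cong) (simp_all add: coord_basis)
  finally show ?thesis by simp
qed

lemma trace_sum:
  assumes "finite A" "\<And>i. i \<in> A \<Longrightarrow> f i \<in> QR"
  shows "Tr (sum f A) = (\<Sum>i\<in>A. Tr (f i))"
  using assms
proof (induction A rule: finite_induct)
  case empty
  show ?case using trace_of_rat_mult[OF R_subset_QR[OF one_in_R], of 0] by simp
next
  case (insert a A)
  have "Tr (f a + sum f A) = Tr (f a) + Tr (sum f A)"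
    using insert.prems insert.hyps(1) by (intro trace_add QR_sum) auto
  with insert show ?case by simp
qed

lemma trace_zero: "Tr 0 = 0"
  using trace_sum[of "{}"] by simp

lemma trace_rat_combination:
  assumes "x \<in> QR"
  shows "Tr (x * (\<Sum>k<n. of_rat (c k) * b k)) = (\<Sum>k<n. c k * Tr (x * b k))"
proof -
  have "x * (\<Sum>k<n. of_rat (c k) * b k) = (\<Sum>k<n. of_rat (c k) * (x * b k))"
    by (simp add: sum_distrib_left algebra_simps)
  then have "Tr (x * (\<Sum>k<n. of_rat (c k) * b k)) = (\<Sum>k<n. Tr (of_rat (c k) * (x * b k)))"
    using assms by (simp only:) (intro trace_sum QR_of_rat_mult QR_mult basis_in_QR, auto)
  also have "\<dots> = (\<Sum>k<n. c k * Tr (x * b k))"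
    using assms by (intro sum.cong trace_of_rat_mult QR_mult basis_in_QR) auto
  finally show ?thesis .
qed

lemma trace_form_nondegenerate:
  assumes x: "x \<in> QR" and "\<And>l. l < n \<Longrightarrow> Tr (x * b l) = 0"
  shows "x = 0"
proof (rule ccontr)
  assume "x \<noteq> 0"
  define y where "y = inverse x"
  have y: "y \<in> QR" unfolding y_def by (rule QR_inverse[OF x])
  have "Tr (x * y) = (\<Sum>l<n. coord y l * Tr (x * b l))"
    by (subst coord_expansion[OF y]) (rule trace_rat_combination[OF x])
  also have "\<dots> = 0" using assms(2) by (intro sum.neutral) simp
  finally have "Tr 1 = 0" using \<open>x \<noteq> 0\<close> unfolding y_def by simp
  then show False using trace_one rank_pos by simp
qed

abbreviation Rdual :: "'a set" where
  "Rdual \<equiv> trace_dual (frac_field R) R"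

lemma mem_Rdual_iff: "x \<in> Rdual \<longleftrightarrow> x \<in> QR \<and> (\<forall>y\<in>R. Tr (x * y) \<in> \<int>)"
  unfolding trace_dual_def frac_field_eq_QR by blast

lemma zero_in_Rdual: "0 \<in> Rdual"
  unfolding mem_Rdual_iff using trace_zero R_zero R_subset_QR by simp

lemma trace_matrix_injective:
  assumes "\<forall>l<n. (\<Sum>k<n. c k * Tr (b k * b l)) = 0"
  shows "\<forall>k<n. c k = 0"
proof -
  define x where "x = (\<Sum>k<n. of_rat (c k) * b k)"
  have x: "x \<in> QR" unfolding x_def by (rule rat_combination_in_QR)
  have "Tr (x * b l) = 0" if l: "l < n" for l
  proof -
    have "Tr (x * b l) = Tr (b l * x)" by (simp add: mult.commute)
    also have "\<dots> = (\<Sum>k<n. c k * Tr (b k * b l))"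
      unfolding x_def trace_rat_combination[OF basis_in_QR[OF l]] by (simp add: mult.commute)
    finally show ?thesis using assms l by simp
  qed
  then have "x = 0" by (rule trace_form_nondegenerate[OF x])
  then show ?thesis using rat_combination_eq_0D unfolding x_def by blast
qed

lemma exists_denominator_of_Rdual: "\<exists>d::nat. d > 0 \<and> (\<forall>x\<in>Rdual. of_nat d * x \<in> R)"
proof -
  define G where "G k l = Tr (b k * b l)" for k l
  have inj: "\<forall>k<n. c k = 0" if "\<forall>l<n. (\<Sum>k<n. c k * G k l) = 0" for c
    using trace_matrix_injective that unfolding G_def by blast
  obtain H where H: "\<And>c k. k < n \<Longrightarrow> (\<Sum>l<n. H k l * (\<Sum>k'<n. c k' * G k' l)) = c k"
    and "\<And>e l. l < n \<Longrightarrow> (\<Sum>k<n. (\<Sum>l'<n. H k l' * e l') * G k l) = e l"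
    using injective_matrix_inverse[where A = G, OF inj] by blast
  have "finite ((\<lambda>(k, l). H k l) ` ({..<n} \<times> {..<n}))" by simp
  then obtain d where d: "d > 0"
    and "\<And>q. q \<in> (\<lambda>(k, l). H k l) ` ({..<n} \<times> {..<n}) \<Longrightarrow> of_int d * q \<in> \<int>"
    using rat_common_denominator by blast
  then have dH: "of_int d * H k l \<in> \<int>" if "k < n" "l < n" for k l
    using that by force
  have "of_int d * x \<in> R" if x: "x \<in> Rdual" for x
  proof (rule in_R_if_coords_in_Ints)
    have xQ: "x \<in> QR" using x mem_Rdual_iff by blast
    then show "of_int d * x \<in> QR" using QR_of_rat_mult[of x "of_int d"] by simp
    have integral: "(\<Sum>k<n. coord x k * G k l) \<in> \<int>" if l: "l < n" for l
    proof -
      have "Tr (b l * x) = (\<Sum>k<n. coord x k * Tr (b l * b k))"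
        by (subst coord_expansion[OF xQ]) (rule trace_rat_combination[OF basis_in_QR[OF l]])
      then have "Tr (x * b l) = (\<Sum>k<n. coord x k * G k l)"
        unfolding G_def by (simp only: mult.commute)
      moreover have "Tr (x * b l) \<in> \<int>" using x basis_in_R[OF l] mem_Rdual_iff by blast
      ultimately show ?thesis by simp
    qed
    fix k assume k: "k < n"
    have "coord (of_int d * x) k = of_int d * coord x k"
      using coord_of_rat_mult[OF xQ k, of "of_int d"] by simp
    also have "\<dots> = of_int d * (\<Sum>l<n. H k l * (\<Sum>k'<n. coord x k' * G k' l))"
      by (simp only: H[OF k])
    also have "\<dots> = (\<Sum>l<n. (of_int d * H k l) * (\<Sum>k'<n. coord x k' * G k' l))"
      by (simp only: sum_distrib_left mult.assoc)
    also have "\<dots> \<in> \<int>" using k by (intro dH integral Ints_sum Ints_mult) auto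
    finally show "coord (of_int d * x) k \<in> \<int>" .
  qed
  then show ?thesis using d by (intro exI[of _ "nat d"]) simp
qed

lemma red_disc_pos: "red_disc R > 0"
  and red_disc_mult_Rdual: "x \<in> Rdual \<Longrightarrow> of_nat (red_disc R) * x \<in> R"
  using LeastI_ex[OF exists_denominator_of_Rdual] unfolding red_disc_def by blast+

lemma red_disc_le:
  assumes "d > 0" "\<And>x. x \<in> Rdual \<Longrightarrow> of_nat d * x \<in> R"
  shows "red_disc R \<le> d"
  unfolding red_disc_def by (rule Least_le) (use assms in blast)

subsection \<open>Reduction modulo an integer\<close>

definition icoord :: "'a \<Rightarrow> nat \<Rightarrow> int" where
  "icoord x l = \<lfloor>coord x l\<rfloor>"

lemma of_int_icoord: "x \<in> R \<Longrightarrow> l < n \<Longrightarrow> of_int (icoord x l) = coord x l"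
  unfolding icoord_def by (metis coord_in_Ints floor_of_int Ints_cases)

lemma icoord_expansion:
  assumes "x \<in> R"
  shows "x = (\<Sum>l<n. of_int (icoord x l) * b l)"
proof -
  have "x = (\<Sum>l<n. of_rat (coord x l) * b l)" by (rule coord_expansion[OF R_subset_QR[OF assms]])
  also have "\<dots> = (\<Sum>l<n. of_int (icoord x l) * b l)"
    by (intro sum.cong) (simp_all flip: of_int_icoord[OF assms])
  finally show ?thesis .
qed

lemma icoord_eqI:
  assumes "x = (\<Sum>l<n. of_int (z l) * b l)" "l < n"
  shows "icoord x l = z l"
proof -
  have "x = (\<Sum>l<n. of_rat (of_int (z l)) * b l)" using assms(1) by simp
  then have "coord x l = of_int (z l)" by (rule coord_eqI[OF _ assms(2)])
  then show ?thesis unfolding icoord_def by simp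
qed

lemma icoord_diff:
  assumes "x \<in> R" "y \<in> R" "l < n"
  shows "icoord (x - y) l = icoord x l - icoord y l"
proof -
  have "(of_int (icoord (x - y) l) :: rat) = of_int (icoord x l - icoord y l)"
    using assms by (simp add: of_int_icoord R_diff coord_diff R_subset_QR)
  then show ?thesis by (simp only: of_int_eq_iff)
qed

definition multiples :: "nat \<Rightarrow> 'a set" where
  "multiples m = {of_nat m * y | y. y \<in> R}"

lemma multiples_add: "x \<in> multiples m \<Longrightarrow> y \<in> multiples m \<Longrightarrow> x + y \<in> multiples m"
  unfolding multiples_def by (auto simp: distrib_left[symmetric] intro!: R_add)

lemma multiples_mult: "x \<in> multiples m \<Longrightarrow> r \<in> R \<Longrightarrow> x * r \<in> multiples m"
  unfolding multiples_def by (auto simp: mult.assoc intro!: R_mult)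

lemma multiples_of_int_mult: "x \<in> multiples m \<Longrightarrow> of_int z * x \<in> multiples m"
  using multiples_mult[OF _ R_of_int] by (metis mult.commute)

lemma zero_in_multiples: "0 \<in> multiples m"
  unfolding multiples_def using R_zero by force

lemma multiples_sum: "finite A \<Longrightarrow> (\<And>i. i \<in> A \<Longrightarrow> f i \<in> multiples m) \<Longrightarrow> sum f A \<in> multiples m"
  by (induction A rule: finite_induct) (auto intro: zero_in_multiples multiples_add)

lemma multiples_iff_icoord_dvd:
  assumes x: "x \<in> R"
  shows "x \<in> multiples m \<longleftrightarrow> (\<forall>l<n. int m dvd icoord x l)"
proof
  assume "x \<in> multiples m"
  then obtain y where y: "x = of_nat m * y" "y \<in> R" unfolding multiples_def by blast
  have "x = of_nat m * (\<Sum>l<n. of_int (icoord y l) * b l)"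
    unfolding y(1) by (rule arg_cong[OF icoord_expansion[OF y(2)]])
  also have "\<dots> = (\<Sum>l<n. of_int (int m * icoord y l) * b l)"
    by (simp add: sum_distrib_left mult.assoc)
  finally have x_eq: "x = (\<Sum>l<n. of_int (int m * icoord y l) * b l)" .
  show "\<forall>l<n. int m dvd icoord x l" using icoord_eqI[OF x_eq] by simp
next
  assume "\<forall>l<n. int m dvd icoord x l"
  then have "\<forall>l<n. \<exists>w. icoord x l = int m * w" by (auto simp: dvd_def)
  then obtain w where w: "\<And>l. l < n \<Longrightarrow> icoord x l = int m * w l" by metis
  have "x = (\<Sum>l<n. of_int (icoord x l) * b l)" by (rule icoord_expansion[OF x])
  also have "\<dots> = of_nat m * (\<Sum>l<n. of_int (w l) * b l)"
    using w by (simp add: sum_distrib_left mult.assoc)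
  finally show "x \<in> multiples m" unfolding multiples_def using R_combination by blast
qed

lemma trace_eq_icoords:
  assumes "x \<in> R"
  shows "Tr x = of_int (\<Sum>k<n. icoord (x * b k) k)"
  using trace_eq_coords[OF R_subset_QR[OF assms]] of_int_icoord[OF R_mult[OF assms basis_in_R]]
  by simp

lemma powers_congruent_mod:
  assumes "m > 0" and \<rho>: "\<rho> \<in> R"
  obtains i j where "i < j" and "\<rho> ^ j - \<rho> ^ i \<in> multiples m"
proof -
  define f where "f i = map (\<lambda>l. icoord (\<rho> ^ i) l mod int m) [0..<n]" for i
  have "range f \<subseteq> {xs. set xs \<subseteq> {0..<int m} \<and> length xs = n}"
    using \<open>m > 0\<close> unfolding f_def by auto
  moreover have "finite {xs. set xs \<subseteq> {0..<int m} \<and> length xs = n}"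
    by (rule finite_lists_length_eq) simp
  ultimately have "\<not> inj f" using finite_subset finite_imageD by blast
  then obtain i j where "f i = f j" "i < j"
    unfolding inj_def by (metis linorder_neqE_nat)
  have step: "\<rho> ^ j - \<rho> ^ i \<in> multiples m"
  proof -
    have "int m dvd icoord (\<rho> ^ j - \<rho> ^ i) l" if l: "l < n" for l
    proof -
      have "icoord (\<rho> ^ j) l mod int m = icoord (\<rho> ^ i) l mod int m"
        using arg_cong[OF \<open>f i = f j\<close>, of "\<lambda>xs. xs ! l"] l unfolding f_def by simp
      then show ?thesis
        using icoord_diff[OF R_power[OF \<rho>] R_power[OF \<rho>] l] by (simp add: mod_eq_dvd_iff)
    qed
    then show ?thesis using multiples_iff_icoord_dvd[OF R_diff[OF R_power[OF \<rho>] R_power[OF \<rho>]]] by blast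
  qed
  with \<open>i < j\<close> show thesis by (rule that)
qed

lemma power_idempotent_mod:
  assumes "m > 0" and \<rho>: "\<rho> \<in> R"
  obtains r where "r \<ge> 1" and "\<rho> ^ (2 * r) - \<rho> ^ r \<in> multiples m"
proof -
  obtain i j where "i < j" and step: "\<rho> ^ j - \<rho> ^ i \<in> multiples m"
    using powers_congruent_mod[OF assms] .
  define L where "L = j - i"
  have periodic: "\<rho> ^ (i + q * L) - \<rho> ^ i \<in> multiples m" for q
  proof (induction q)
    case 0
    then show ?case using zero_in_multiples by simp
  next
    case (Suc q)
    have exponent: "i + Suc q * L = j + q * L" using \<open>i < j\<close> unfolding L_def by simp
    have "\<rho> ^ (i + Suc q * L) - \<rho> ^ i = (\<rho> ^ j - \<rho> ^ i) * \<rho> ^ (q * L) + (\<rho> ^ (i + q * L) - \<rho> ^ i)"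
      unfolding exponent power_add by (simp add: algebra_simps)
    then show ?case using multiples_add[OF multiples_mult[OF step R_power[OF \<rho>]] Suc] by (simp only:)
  qed
  define r where "r = L * (i + 1)"
  have "L \<ge> 1" unfolding L_def using \<open>i < j\<close> by simp
  then have "r \<ge> i + 1" unfolding r_def using mult_le_mono1[of 1 L "i + 1"] by simp
  then have "2 * r = i + (i + 1) * L + (r - i)" "r = i + (r - i)"
    unfolding r_def by (simp_all add: algebra_simps)
  then have "\<rho> ^ (2 * r) - \<rho> ^ r = (\<rho> ^ (i + (i + 1) * L) - \<rho> ^ i) * \<rho> ^ (r - i)"
    by (metis left_diff_distrib power_add)
  then have "\<rho> ^ (2 * r) - \<rho> ^ r \<in> multiples m"
    using multiples_mult[OF periodic[of "i + 1"] R_power[OF \<rho>]] by (simp only:)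
  with \<open>r \<ge> i + 1\<close> show thesis by (intro that) simp_all
qed

lemma icoord_square_mult_basis:
  assumes \<epsilon>: "\<epsilon> \<in> R" and k: "k < n" and l: "l < n"
  shows "icoord (\<epsilon> * \<epsilon> * b k) l = (\<Sum>m<n. icoord (\<epsilon> * b k) m * icoord (\<epsilon> * b m) l)"
proof (rule icoord_eqI[OF _ l])
  define E where "E k l = icoord (\<epsilon> * b k) l" for k l
  have E_expansion: "\<epsilon> * b k = (\<Sum>l<n. of_int (E k l) * b l)" if "k < n" for k
    unfolding E_def by (rule icoord_expansion[OF R_mult[OF \<epsilon> basis_in_R[OF that]]])
  have "\<epsilon> * \<epsilon> * b k = (\<Sum>m<n. of_int (E k m) * (\<epsilon> * b m))"
    by (simp add: E_expansion[OF k] mult.assoc sum_distrib_left mult.left_commute)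
  also have "\<dots> = (\<Sum>m<n. of_int (E k m) * (\<Sum>l<n. of_int (E m l) * b l))"
    using E_expansion by (intro sum.cong) auto
  also have "\<dots> = (\<Sum>m<n. \<Sum>l<n. of_int (E k m * E m l) * b l)"
    by (simp add: sum_distrib_left mult.assoc)
  also have "\<dots> = (\<Sum>l<n. of_int (\<Sum>m<n. E k m * E m l) * b l)"
    by (subst sum.swap) (simp add: sum_distrib_right)
  finally show "\<epsilon> * \<epsilon> * b k = (\<Sum>l<n. of_int (\<Sum>m<n. icoord (\<epsilon> * b k) m * icoord (\<epsilon> * b m) l) * b l)"
    unfolding E_def .
qed

lemma idempotent_mod_prime_in_multiples:
  assumes "prime p" and "n < p" and \<epsilon>: "\<epsilon> \<in> R"
    and idem: "\<epsilon> * \<epsilon> - \<epsilon> \<in> multiples p" and trace: "Tr \<epsilon> = of_int (int p * t)"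
  shows "\<epsilon> \<in> multiples p"
proof -
  define E where "E k l = icoord (\<epsilon> * b k) l" for k l
  have \<epsilon>b: "\<epsilon> * b k \<in> R" if "k < n" for k using R_mult[OF \<epsilon> basis_in_R[OF that]] .
  have E_idem: "int p dvd (\<Sum>m\<in>{..<n}. E k m * E m l) - E k l" if "k \<in> {..<n}" "l \<in> {..<n}" for k l
  proof -
    from that have k: "k < n" and l: "l < n" by auto
    have \<epsilon>\<epsilon>b: "\<epsilon> * \<epsilon> * b k \<in> R" using R_mult[OF \<epsilon> \<epsilon>b[OF k]] by (simp add: mult.assoc)
    have "\<epsilon> * \<epsilon> * b k - \<epsilon> * b k \<in> multiples p"
      using multiples_mult[OF idem basis_in_R[OF k]] by (simp add: algebra_simps)
    then have "\<forall>l<n. int p dvd icoord (\<epsilon> * \<epsilon> * b k - \<epsilon> * b k) l"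
      by (simp only: multiples_iff_icoord_dvd[OF R_diff[OF \<epsilon>\<epsilon>b \<epsilon>b[OF k]]])
    then have "int p dvd icoord (\<epsilon> * \<epsilon> * b k - \<epsilon> * b k) l" using l by blast
    moreover have "icoord (\<epsilon> * \<epsilon> * b k - \<epsilon> * b k) l = (\<Sum>m<n. E k m * E m l) - E k l"
      using icoord_diff[OF \<epsilon>\<epsilon>b \<epsilon>b[OF k] l] icoord_square_mult_basis[OF \<epsilon> k l] unfolding E_def by simp
    ultimately show ?thesis by simp
  qed
  have "(of_int (\<Sum>k<n. E k k) :: rat) = of_int (int p * t)"
    using trace_eq_icoords[OF \<epsilon>] trace unfolding E_def by (rule trans[OF sym])
  then have "(\<Sum>k<n. E k k) = int p * t" by (simp only: of_int_eq_iff)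
  then have trace_dvd: "int p dvd (\<Sum>k<n. E k k)" by simp
  \<comment> \<open>Otherwise the trace would be congruent to a rank in 1..n, and n < p.\<close>
  have E_dvd: "int p dvd E k l" if "k < n" "l < n" for k l
  proof (rule ccontr)
    assume "\<not> int p dvd E k l"
    with that have "\<exists>k\<in>{..<n}. \<exists>l\<in>{..<n}. \<not> int p dvd E k l" by auto
    from idempotent_mod_prime_trace[OF _ finite_lessThan E_idem this] \<open>prime p\<close>
    obtain r where r: "1 \<le> r" "r \<le> n" "int p dvd (\<Sum>i<n. E i i) - int r" by auto
    then have "int p dvd int r" using dvd_diff[OF trace_dvd r(3)] by simp
    then have "p \<le> r" using r(1) by (simp add: dvd_imp_le)
    with r(2) \<open>n < p\<close> show False by simp
  qed
  have "\<epsilon> * b k \<in> multiples p" if "k < n" for k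
    using multiples_iff_icoord_dvd[OF \<epsilon>b[OF that]] E_dvd that unfolding E_def by blast
  then have "(\<Sum>k<n. of_int (icoord 1 k) * (\<epsilon> * b k)) \<in> multiples p"
    by (intro multiples_sum multiples_of_int_mult) auto
  moreover have "\<epsilon> = \<epsilon> * (\<Sum>k<n. of_int (icoord 1 k) * b k)"
    by (subst icoord_expansion[OF one_in_R, symmetric]) simp
  then have "\<epsilon> = (\<Sum>k<n. of_int (icoord 1 k) * (\<epsilon> * b k))"
    by (simp only: sum_distrib_left mult.left_commute)
  ultimately show ?thesis by simp
qed

end

section \<open>Rationals that are integral at a prime\<close>

definition p_integral :: "nat \<Rightarrow> rat \<Rightarrow> bool" where
  "p_integral p q \<longleftrightarrow> (\<exists>z s. q = of_int z / of_int s \<and> \<not> int p dvd s)"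

context
  fixes p :: nat
  assumes prime: "prime p"
begin

private lemma not_dvd_mult: "\<not> int p dvd s \<Longrightarrow> \<not> int p dvd t \<Longrightarrow> \<not> int p dvd s * t"
  using prime by (simp add: prime_dvd_mult_iff)

lemma p_integral_of_int: "p_integral p (of_int z)"
  unfolding p_integral_def using prime
  by (intro exI[of _ z] exI[of _ 1]) (auto simp: prime_gt_1_nat)

lemma p_integral_mult:
  assumes "p_integral p x" "p_integral p y"
  shows "p_integral p (x * y)"
proof -
  from assms obtain z s w t where "x = of_int z / of_int s" "\<not> int p dvd s"
    and "y = of_int w / of_int t" "\<not> int p dvd t" unfolding p_integral_def by blast
  then show ?thesis
    unfolding p_integral_def by (intro exI[of _ "z * w"] exI[of _ "s * t"]) (simp add: not_dvd_mult)
qed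

lemma p_integral_add:
  assumes "p_integral p x" "p_integral p y"
  shows "p_integral p (x + y)"
proof -
  from assms obtain z s w t where x: "x = of_int z / of_int s" "\<not> int p dvd s"
    and y: "y = of_int w / of_int t" "\<not> int p dvd t" unfolding p_integral_def by blast
  have "s \<noteq> 0" using x(2) by (metis dvd_0_right)
  have "t \<noteq> 0" using y(2) by (metis dvd_0_right)
  have "x + y = of_int (z * t + w * s) / of_int (s * t)"
    unfolding x(1) y(1) using \<open>s \<noteq> 0\<close> \<open>t \<noteq> 0\<close> by (simp add: field_simps)
  then show ?thesis unfolding p_integral_def using x(2) y(2) not_dvd_mult by blast
qed

lemma p_integral_divide:
  assumes "p_integral p x" "\<not> p dvd s"
  shows "p_integral p (x / of_nat s)"
proof -
  have "p_integral p (1 / of_nat s)"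
    unfolding p_integral_def using assms(2)
    by (intro exI[of _ 1] exI[of _ "int s"]) simp
  from p_integral_mult[OF assms(1) this] show ?thesis by simp
qed

lemma dvd_if_p_integral_divide:
  assumes "p_integral p (of_int z / of_nat p)"
  shows "int p dvd z"
proof -
  from assms obtain w s where zw: "of_int z / of_nat p = (of_int w / of_int s :: rat)"
    and s: "\<not> int p dvd s" unfolding p_integral_def by blast
  have "s \<noteq> 0" using s by (metis dvd_0_right)
  have "p \<noteq> 0" using prime by (metis not_prime_0)
  have "(of_int (z * s) :: rat) = of_int z / of_nat p * of_nat p * of_int s"
    using \<open>p \<noteq> 0\<close> by simp
  also have "\<dots> = of_int (int p * w)" unfolding zw using \<open>s \<noteq> 0\<close> by simp
  finally have "z * s = int p * w" by (simp only: of_int_eq_iff)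
  then have "int p dvd z * s" by simp
  with s show ?thesis using prime by (simp add: prime_dvd_mult_iff)
qed

lemma p_integral_ratio:
  assumes "a > 0" and "multiplicity p a < multiplicity p d"
  shows "p_integral p (of_nat d / of_nat a / of_nat p)"
proof -
  define k where "k = multiplicity p a"
  have "\<not> is_unit p" using prime by auto
  then obtain u where a: "a = p ^ k * u" "\<not> p dvd u"
    using multiplicity_decompose'[of a p] assms(1) unfolding k_def by auto
  have "p ^ (k + 1) dvd d" using assms(2) unfolding k_def by (intro multiplicity_dvd') simp
  then obtain v where d: "d = p ^ (k + 1) * v" by (elim dvdE)
  have "p > 0" using prime by (simp add: prime_gt_0_nat)
  have "u > 0" using a assms(1) by (simp add: gr0I)
  have "(of_nat d / of_nat a / of_nat p :: rat) = of_int (int v) / of_int (int u)"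
    unfolding d a(1) using \<open>p > 0\<close> \<open>u > 0\<close> by (simp add: field_simps power_add)
  then show ?thesis unfolding p_integral_def using a(2) by (metis int_dvd_int_iff)
qed

end

section \<open>Localisation at a prime and the trace radical\<close>

locale order_at_prime = order_with_basis R n b for R :: "'a::field_char_0 set" and n b +
  fixes p :: nat
  assumes prime: "prime p"
begin

abbreviation Rp :: "'a set" where
  "Rp \<equiv> loc_at p R"

lemma mem_Rp_iff: "x \<in> Rp \<longleftrightarrow> (\<exists>r s. x = r / of_nat s \<and> r \<in> R \<and> \<not> p dvd s)"
  unfolding loc_at_def by blast

lemma R_subset_Rp: "x \<in> R \<Longrightarrow> x \<in> Rp"
  unfolding mem_Rp_iff using prime by (intro exI[of _ x] exI[of _ 1]) (auto simp: prime_gt_1_nat)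

lemma one_in_Rp: "1 \<in> Rp"
  and zero_in_Rp: "0 \<in> Rp"
  using R_subset_Rp one_in_R R_zero by blast+

lemma Rp_add:
  assumes "x \<in> Rp" "y \<in> Rp"
  shows "x + y \<in> Rp"
proof -
  from assms obtain r s r' s' where x: "x = r / of_nat s" "r \<in> R" "\<not> p dvd s"
    and y: "y = r' / of_nat s'" "r' \<in> R" "\<not> p dvd s'" unfolding mem_Rp_iff by blast
  have "s \<noteq> 0" using x(3) by (metis dvd_0_right)
  have "s' \<noteq> 0" using y(3) by (metis dvd_0_right)
  then have "x + y = (of_nat s' * r + of_nat s * r') / of_nat (s * s')"
    using \<open>s \<noteq> 0\<close> x(1) y(1) by (simp add: field_simps)
  moreover have "of_nat s' * r + of_nat s * r' \<in> R" using x y by (intro R_add R_of_nat_mult)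
  moreover have "\<not> p dvd s * s'" using x(3) y(3) prime prime_dvd_mult_iff by blast
  ultimately show ?thesis unfolding mem_Rp_iff by blast
qed

lemma Rp_mult:
  assumes "x \<in> Rp" "y \<in> Rp"
  shows "x * y \<in> Rp"
proof -
  from assms obtain r s r' s' where x: "x = r / of_nat s" "r \<in> R" "\<not> p dvd s"
    and y: "y = r' / of_nat s'" "r' \<in> R" "\<not> p dvd s'" unfolding mem_Rp_iff by blast
  have "x * y = (r * r') / of_nat (s * s')" using x y by simp
  moreover have "\<not> p dvd s * s'" using x(3) y(3) prime prime_dvd_mult_iff by blast
  ultimately show ?thesis unfolding mem_Rp_iff using x(2) y(2) R_mult by blast
qed

lemma Rp_divide:
  assumes "x \<in> Rp" "\<not> p dvd t"
  shows "x / of_nat t \<in> Rp"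
proof -
  from assms obtain r s where x: "x = r / of_nat s" "r \<in> R" "\<not> p dvd s" unfolding mem_Rp_iff by blast
  have "x / of_nat t = r / of_nat (s * t)" using x by simp
  moreover have "\<not> p dvd s * t" using x(3) assms(2) prime prime_dvd_mult_iff by blast
  ultimately show ?thesis unfolding mem_Rp_iff using x by blast
qed

lemma Rp_power: "x \<in> Rp \<Longrightarrow> x ^ k \<in> Rp"
  by (induction k) (auto intro: one_in_Rp Rp_mult)

lemma Rp_sum: "finite A \<Longrightarrow> (\<And>i. i \<in> A \<Longrightarrow> f i \<in> Rp) \<Longrightarrow> sum f A \<in> Rp"
  by (induction A rule: finite_induct) (auto intro: zero_in_Rp Rp_add)

lemma Rp_of_int_mult: "x \<in> Rp \<Longrightarrow> of_int z * x \<in> Rp"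
  using Rp_mult[OF R_subset_Rp[OF R_of_int]] by blast

lemma Rp_subset_QR:
  assumes "x \<in> Rp"
  shows "x \<in> QR"
proof -
  from assms obtain r s where x: "x = r / of_nat s" "r \<in> R" unfolding mem_Rp_iff by blast
  then have "x = of_rat (1 / of_nat s) * r" by (simp add: of_rat_divide)
  then show ?thesis using QR_of_rat_mult[OF R_subset_QR[OF x(2)]] by simp
qed

lemma trace_Rdual_Rp_p_integral:
  assumes x: "x \<in> Rdual" and w: "w \<in> Rp"
  shows "p_integral p (Tr (x * w))"
proof -
  from w obtain r s where w: "w = r / of_nat s" "r \<in> R" "\<not> p dvd s" unfolding mem_Rp_iff by blast
  have "x \<in> QR" using x mem_Rdual_iff by blast
  have "Tr (x * w) = Tr (of_rat (1 / of_nat s) * (x * r))"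
    unfolding w(1) by (simp add: of_rat_divide)
  also have "\<dots> = Tr (x * r) / of_nat s"
    using trace_of_rat_mult[OF QR_mult[OF \<open>x \<in> QR\<close> R_subset_QR[OF w(2)]]] by simp
  finally have "Tr (x * w) = Tr (x * r) / of_nat s" .
  moreover obtain z where "Tr (x * r) = of_int z"
    using x w(2) mem_Rdual_iff Ints_cases by metis
  ultimately show ?thesis using p_integral_divide[OF prime p_integral_of_int[OF prime] w(3)] by simp
qed

definition trace_radical :: "'a set" where
  "trace_radical = {v \<in> Rp. \<forall>w\<in>Rp. p_integral p (Tr (v * w) / of_nat p)}"

lemma trace_radical_subset_Rp: "v \<in> trace_radical \<Longrightarrow> v \<in> Rp"
  unfolding trace_radical_def by blast

lemma zero_in_trace_radical: "0 \<in> trace_radical"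
  unfolding trace_radical_def using zero_in_Rp trace_zero p_integral_of_int[OF prime, of 0] by simp

lemma trace_radical_mult:
  assumes v: "v \<in> trace_radical" and w: "w \<in> Rp"
  shows "v * w \<in> trace_radical"
  unfolding trace_radical_def
proof (intro CollectI conjI ballI)
  show "v * w \<in> Rp" using Rp_mult[OF trace_radical_subset_Rp[OF v] w] .
  fix w' assume "w' \<in> Rp"
  then have "p_integral p (Tr (v * (w * w')) / of_nat p)"
    using v Rp_mult[OF w] unfolding trace_radical_def by blast
  then show "p_integral p (Tr (v * w * w') / of_nat p)" by (simp add: mult.assoc)
qed

lemma trace_radical_add:
  assumes v: "v \<in> trace_radical" and u: "u \<in> trace_radical"
  shows "v + u \<in> trace_radical"
  unfolding trace_radical_def
proof (intro CollectI conjI ballI)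
  have vQ: "v \<in> QR" and uQ: "u \<in> QR"
    using Rp_subset_QR trace_radical_subset_Rp v u by blast+
  show "v + u \<in> Rp" using Rp_add trace_radical_subset_Rp v u by blast
  fix w assume w: "w \<in> Rp"
  have "Tr ((v + u) * w) / of_nat p = Tr (v * w) / of_nat p + Tr (u * w) / of_nat p"
    using trace_add[OF QR_mult[OF vQ Rp_subset_QR[OF w]] QR_mult[OF uQ Rp_subset_QR[OF w]]]
    by (simp add: distrib_right add_divide_distrib)
  moreover have "p_integral p (Tr (v * w) / of_nat p)" "p_integral p (Tr (u * w) / of_nat p)"
    using v u w unfolding trace_radical_def by blast+
  ultimately show "p_integral p (Tr ((v + u) * w) / of_nat p)"
    using p_integral_add[OF prime] by simp
qed

lemma trace_radical_nilpotent:
  assumes "n < p" and v: "v \<in> trace_radical"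
  obtains t \<sigma> where "v ^ t = of_nat p * \<sigma>" and "\<sigma> \<in> Rp"
proof -
  obtain r0 s where rs: "v = r0 / of_nat s" "r0 \<in> R" "\<not> p dvd s"
    using trace_radical_subset_Rp[OF v] mem_Rp_iff by blast
  have "s \<noteq> 0" using rs(3) by (metis dvd_0_right)
  then have "r0 = v * of_nat s" using rs(1) by simp
  then have r0: "r0 \<in> trace_radical"
    using trace_radical_mult[OF v R_subset_Rp[OF R_of_nat_mult[OF one_in_R]]] by simp
  have "p > 0" using prime by (simp add: prime_gt_0_nat)
  then obtain r where "r \<ge> 1" and idem: "r0 ^ (2 * r) - r0 ^ r \<in> multiples p"
    using power_idempotent_mod[OF _ rs(2)] by blast
  define \<epsilon> where "\<epsilon> = r0 ^ r"
  have \<epsilon>R: "\<epsilon> \<in> R" unfolding \<epsilon>_def by (rule R_power[OF rs(2)])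
  have "\<epsilon> = r0 * r0 ^ (r - 1)" unfolding \<epsilon>_def using \<open>r \<ge> 1\<close> by (simp flip: power_Suc)
  then have "\<epsilon> \<in> trace_radical"
    using trace_radical_mult[OF r0 Rp_power[OF R_subset_Rp[OF rs(2)]]] by simp
  then have "p_integral p (Tr \<epsilon> / of_nat p)"
    using one_in_Rp unfolding trace_radical_def by fastforce
  then have "int p dvd (\<Sum>k<n. icoord (\<epsilon> * b k) k)"
    using dvd_if_p_integral_divide[OF prime] trace_eq_icoords[OF \<epsilon>R] by simp
  then obtain t where "(\<Sum>k<n. icoord (\<epsilon> * b k) k) = int p * t" by (elim dvdE)
  then have "Tr \<epsilon> = of_int (int p * t)" using trace_eq_icoords[OF \<epsilon>R] by simp
  moreover have "\<epsilon> * \<epsilon> = r0 ^ (2 * r)" unfolding \<epsilon>_def by (simp only: mult_2 power_add)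
  then have "\<epsilon> * \<epsilon> - \<epsilon> \<in> multiples p" using idem unfolding \<epsilon>_def by (simp only:)
  ultimately have "\<epsilon> \<in> multiples p"
    by (intro idempotent_mod_prime_in_multiples[OF prime \<open>n < p\<close> \<epsilon>R])
  then obtain y where y: "r0 ^ r = of_nat p * y" "y \<in> R" unfolding multiples_def \<epsilon>_def by blast
  have "v ^ r = of_nat p * (y / of_nat (s ^ r))" using rs(1) y(1) by (simp add: power_divide)
  moreover have "y / of_nat (s ^ r) \<in> Rp"
    using Rp_divide[OF R_subset_Rp[OF y(2)]] rs(3) prime by (metis prime_dvd_power)
  ultimately show thesis by (rule that)
qed

definition disc_ideal :: "nat \<Rightarrow> 'a set" where
  "disc_ideal a = {of_nat (red_disc R) * x + of_nat a * r | x r. x \<in> Rdual \<and> r \<in> R}"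

lemma red_disc_Rdual_in_disc_ideal: "x \<in> Rdual \<Longrightarrow> of_nat (red_disc R) * x \<in> disc_ideal a"
  unfolding disc_ideal_def using R_zero by force

lemma of_nat_in_disc_ideal: "of_nat a \<in> disc_ideal a"
  unfolding disc_ideal_def using zero_in_Rdual one_in_R by force

lemma dual_multiple_in_trace_radical:
  assumes x: "x \<in> Rdual" and "a > 0"
    and ah: "of_nat a * h \<in> Rp" and dxh: "of_nat d * x * h \<in> Rp"
    and ratio: "p_integral p (of_nat d / of_nat a / of_nat p)"
  shows "of_nat d * x * h \<in> trace_radical"
  unfolding trace_radical_def
proof (intro CollectI conjI ballI dxh)
  fix w assume w: "w \<in> Rp"
  define \<sigma> where "\<sigma> = w * (of_nat a * h)"
  have \<sigma>: "\<sigma> \<in> Rp" unfolding \<sigma>_def by (rule Rp_mult[OF w ah])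
  have xQ: "x \<in> QR" using x mem_Rdual_iff by blast
  \<comment> \<open>Because a h lies in R_p, the trace of d x h w is (d/a) times an element of Z_(p).\<close>
  have "of_nat d * x * h * w = of_rat (of_nat d / of_nat a) * (x * \<sigma>)"
    unfolding \<sigma>_def using \<open>a > 0\<close> by (simp add: of_rat_divide field_simps)
  then have "Tr (of_nat d * x * h * w) = of_nat d / of_nat a * Tr (x * \<sigma>)"
    using trace_of_rat_mult[OF QR_mult[OF xQ Rp_subset_QR[OF \<sigma>]]] by (simp only:)
  then have "Tr (of_nat d * x * h * w) / of_nat p = of_nat d / of_nat a / of_nat p * Tr (x * \<sigma>)"
    by simp
  then show "p_integral p (Tr (of_nat d * x * h * w) / of_nat p)"
    using p_integral_mult[OF prime ratio trace_Rdual_Rp_p_integral[OF x \<sigma>]] by simp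
qed

lemma one_eq_trace_radical_plus_multiple:
  assumes "a > 0" and "multiplicity p a < multiplicity p (red_disc R)"
    and J0: "0 \<in> J" and J_add: "\<And>x y. x \<in> J \<Longrightarrow> y \<in> J \<Longrightarrow> x + y \<in> J"
    and J_mult: "\<And>r x. r \<in> Rp \<Longrightarrow> x \<in> J \<Longrightarrow> r * x \<in> J"
    and inverse: "ideal_mult (ideal_mult (disc_ideal a) Rp) J = Rp"
  obtains \<nu> g where "1 = \<nu> + of_nat a * g" and "\<nu> \<in> trace_radical" and "g \<in> J"
proof -
  have in_Rp: "f * s * g \<in> Rp" if "f \<in> disc_ideal a" "s \<in> Rp" "g \<in> J" for f s g
    using mem_ideal_mult[OF mem_ideal_mult[OF that(1,2)] that(3)] inverse by simp
  have aJ: "of_nat a * g \<in> Rp" if "g \<in> J" for g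
    using in_Rp[OF of_nat_in_disc_ideal one_in_Rp that] by simp
  have ratio: "p_integral p (of_nat (red_disc R) / of_nat a / of_nat p)"
    using p_integral_ratio[OF prime assms(1,2)] .
  define P where "P = {\<nu> + of_nat a * g | \<nu> g. \<nu> \<in> trace_radical \<and> g \<in> J}"
  have P0: "0 \<in> P" unfolding P_def using zero_in_trace_radical J0 by force
  have P_add: "x + y \<in> P" if "x \<in> P" "y \<in> P" for x y
  proof -
    from that obtain \<nu> g \<nu>' g' where "x = \<nu> + of_nat a * g" "\<nu> \<in> trace_radical" "g \<in> J"
      "y = \<nu>' + of_nat a * g'" "\<nu>' \<in> trace_radical" "g' \<in> J" unfolding P_def by blast
    moreover from this have "x + y = (\<nu> + \<nu>') + of_nat a * (g + g')"
      by (simp add: algebra_simps)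
    ultimately show ?thesis unfolding P_def using trace_radical_add J_add by blast
  qed
  have generators: "f * s * g \<in> P" if f: "f \<in> disc_ideal a" and s: "s \<in> Rp" and g: "g \<in> J" for f s g
  proof -
    from f obtain x r where fx: "f = of_nat (red_disc R) * x + of_nat a * r" "x \<in> Rdual" "r \<in> R"
      unfolding disc_ideal_def by blast
    have "of_nat a * (s * g) \<in> Rp" using Rp_mult[OF s aJ[OF g]] by (simp add: mult_ac)
    moreover have "of_nat (red_disc R) * x * (s * g) \<in> Rp"
      using in_Rp[OF red_disc_Rdual_in_disc_ideal[OF fx(2)] s g] by (simp add: mult.assoc)
    ultimately have "of_nat (red_disc R) * x * (s * g) \<in> trace_radical"
      using dual_multiple_in_trace_radical[OF fx(2) \<open>a > 0\<close> _ _ ratio] by blast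
    moreover have "r * s * g \<in> J" using J_mult[OF Rp_mult[OF R_subset_Rp[OF fx(3)] s] g] .
    moreover have "f * s * g = of_nat (red_disc R) * x * (s * g) + of_nat a * (r * s * g)"
      unfolding fx(1) by (simp add: algebra_simps)
    ultimately show ?thesis unfolding P_def by blast
  qed
  have "ideal_mult (ideal_mult (disc_ideal a) Rp) J \<subseteq> P"
    using P0 P_add generators by (rule ideal_mult_mult_subset)
  with inverse one_in_Rp have "1 \<in> P" by blast
  then show thesis using that unfolding P_def by blast
qed

lemma mem_R_if_prime_power_mult:
  assumes "y \<in> Rp" and "of_nat (p ^ k) * y \<in> R"
  shows "y \<in> R"
proof -
  obtain r s where y: "y = r / of_nat s" "r \<in> R" "\<not> p dvd s" using assms(1) mem_Rp_iff by blast
  have "s \<noteq> 0" using y(3) by (metis dvd_0_right)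
  then have sy: "of_nat s * y \<in> R" using y(1,2) by simp
  have "coprime (int s) (int (p ^ k))"
    using y(3) prime by (simp add: coprime_commute prime_imp_coprime)
  then obtain \<alpha> \<beta> where "\<alpha> * int s + \<beta> * int (p ^ k) = 1"
    by (metis bezout_int coprime_iff_gcd_eq_1)
  then have "(of_int (\<alpha> * int s + \<beta> * int (p ^ k)) :: 'a) = 1" by (simp only: of_int_1)
  then have "(of_int \<alpha> * of_nat s + of_int \<beta> * of_nat (p ^ k) :: 'a) = 1" by simp
  then have y_eq: "of_int \<alpha> * (of_nat s * y) + of_int \<beta> * (of_nat (p ^ k) * y) = y"
    by (metis distrib_right mult.assoc mult_1)
  from R_add[OF R_of_int_mult[OF sy, of \<alpha>] R_of_int_mult[OF assms(2), of \<beta>]]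
  show ?thesis unfolding y_eq .
qed

lemma cofactor_mult_Rdual_in_Rp:
  assumes "n < p" and a: "a = p ^ k * u" "\<not> p dvd u" and disc: "red_disc R = p ^ k * d"
    and one: "1 = \<nu> + of_nat a * g" and \<nu>: "\<nu> \<in> trace_radical" and g: "g \<in> J"
    and J_mult: "\<And>r x. r \<in> Rp \<Longrightarrow> x \<in> J \<Longrightarrow> r * x \<in> J"
    and disc_J: "\<And>x h. x \<in> Rdual \<Longrightarrow> h \<in> J \<Longrightarrow> of_nat (red_disc R) * x * h \<in> Rp"
    and x: "x \<in> Rdual"
  shows "of_nat d * x \<in> Rp"
proof -
  obtain t \<sigma> where \<sigma>: "\<nu> ^ t = of_nat p * \<sigma>" "\<sigma> \<in> Rp"
    using trace_radical_nilpotent[OF \<open>n < p\<close> \<nu>] .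
  define T where "T = t * k"
  have \<nu>T: "\<nu> ^ T = of_nat (p ^ k) * \<sigma> ^ k"
    unfolding T_def power_mult \<sigma>(1) by (simp add: power_mult_distrib)
  \<comment> \<open>Geometric series: 1 - \<nu>^T = (1 - \<nu>) (1 + \<nu> + ... + \<nu>^(T-1)) = a \<psi>.\<close>
  define \<psi> where "\<psi> = (\<Sum>i<T. \<nu> ^ i) * g"
  have "(\<Sum>i<T. \<nu> ^ i) \<in> Rp"
    by (rule Rp_sum) (auto intro: Rp_power trace_radical_subset_Rp[OF \<nu>])
  then have \<psi>: "\<psi> \<in> J" unfolding \<psi>_def using g by (rule J_mult)
  have a\<psi>: "of_nat a * \<psi> = 1 - \<nu> ^ T"
  proof -
    have "1 - \<nu> = of_nat a * g" using one by (metis add_diff_cancel_left')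
    then have "1 - \<nu> ^ T = of_nat a * g * (\<Sum>i<T. \<nu> ^ i)" by (simp only: one_diff_power_eq)
    then show ?thesis unfolding \<psi>_def by (simp only: mult_ac)
  qed
  have "of_nat d * x * (1 - \<nu> ^ T) = of_nat u * (of_nat (red_disc R) * x * \<psi>)"
    unfolding a\<psi>[symmetric] disc a(1) by (simp add: algebra_simps)
  then have "of_nat d * x * (1 - \<nu> ^ T) \<in> Rp"
    using Rp_of_int_mult[OF disc_J[OF x \<psi>], of "int u"] by (simp only: of_int_of_nat_eq)
  moreover have "of_nat d * x * \<nu> ^ T = (of_nat (red_disc R) * x) * \<sigma> ^ k"
    unfolding \<nu>T disc by (simp add: algebra_simps)
  then have "of_nat d * x * \<nu> ^ T \<in> Rp"
    using Rp_mult[OF R_subset_Rp[OF red_disc_mult_Rdual[OF x]] Rp_power[OF \<sigma>(2)]] by (simp only:)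
  ultimately have "of_nat d * x * (1 - \<nu> ^ T) + of_nat d * x * \<nu> ^ T \<in> Rp" by (rule Rp_add)
  then show ?thesis by (simp add: algebra_simps)
qed

lemma prime_le_rank:
  assumes "a > 0" and "0 < multiplicity p a" and "multiplicity p a < multiplicity p (red_disc R)"
    and "invertible_at R p (disc_ideal a)"
  shows "p \<le> n"
proof (rule ccontr)
  assume "\<not> p \<le> n"
  from assms(4) obtain J where "0 \<in> J" "\<forall>x\<in>J. \<forall>y\<in>J. x + y \<in> J" "\<forall>r\<in>Rp. \<forall>x\<in>J. r * x \<in> J"
    and inverse: "ideal_mult (ideal_mult (disc_ideal a) Rp) J = Rp"
    unfolding invertible_at_def by blast
  then have J: "0 \<in> J" "\<And>x y. x \<in> J \<Longrightarrow> y \<in> J \<Longrightarrow> x + y \<in> J"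
      "\<And>r x. r \<in> Rp \<Longrightarrow> x \<in> J \<Longrightarrow> r * x \<in> J"
    by blast+
  obtain \<nu> g where decomposition: "1 = \<nu> + of_nat a * g" "\<nu> \<in> trace_radical" "g \<in> J"
    using one_eq_trace_radical_plus_multiple[OF assms(1,3) J inverse] .
  define k where "k = multiplicity p a"
  have "\<not> is_unit p" using prime by auto
  then obtain u where a: "a = p ^ k * u" "\<not> p dvd u"
    using multiplicity_decompose'[of a p] assms(1) unfolding k_def by auto
  have "p ^ k dvd red_disc R" using assms(3) unfolding k_def by (intro multiplicity_dvd') simp
  then obtain d where disc: "red_disc R = p ^ k * d" by (elim dvdE)
  have disc_J: "of_nat (red_disc R) * x * h \<in> Rp" if "x \<in> Rdual" "h \<in> J" for x h
    using mem_ideal_mult[OF mem_ideal_mult[OF red_disc_Rdual_in_disc_ideal[OF that(1), of a] one_in_Rp] that(2)]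
      inverse by simp
  have "of_nat d * x \<in> R" if x: "x \<in> Rdual" for x
  proof (rule mem_R_if_prime_power_mult)
    show "of_nat d * x \<in> Rp"
      using cofactor_mult_Rdual_in_Rp[OF _ a disc decomposition J(3) disc_J x] \<open>\<not> p \<le> n\<close> by simp
    show "of_nat (p ^ k) * (of_nat d * x) \<in> R"
      using red_disc_mult_Rdual[OF x] unfolding disc by (simp add: mult.assoc)
  qed
  moreover have "d > 0" using red_disc_pos disc by (simp add: gr0I)
  ultimately have "red_disc R \<le> d" by (intro red_disc_le)
  moreover have "p ^ k > 1"
    using one_less_power[OF prime_gt_1_nat[OF prime]] assms(2) unfolding k_def by simp
  then have "d < red_disc R" unfolding disc using mult_strict_right_mono[OF _ \<open>d > 0\<close>] by simp
  ultimately show False by simp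
qed

end

theorem proposition5p33:
  fixes R :: "'a::field_char_0 set" and n p a :: nat
  assumes "is_order R n"
    and "prime p"
    and "a > 0"
    and "0 < multiplicity p a"
    and "multiplicity p a < multiplicity p (red_disc R)"
    and "invertible_at R p
           {of_nat (red_disc R) * x + of_nat a * r | x r.
              x \<in> trace_dual (frac_field R) R \<and> r \<in> R}"
  shows "p \<le> n"
proof -
  obtain b where "order_with_basis R n b" using is_order_obtain_basis[OF assms(1)] .
  then interpret order_at_prime R n b p
    using assms(2) by (simp add: order_at_prime_def order_at_prime_axioms_def)
  show ?thesis using prime_le_rank[OF assms(3-5)] assms(6) unfolding disc_ideal_def by (simp only:)
qed

end
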